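(* The reduction systems $(\mathcal T,\to_{\lambda j/{\tt CS}})$ and $(\mathcal T,\to_{\lambda j/{\tt o}})$ are both confluent and enjoy PSN (every $\beta$-strongly normalizing $\lambda$-term is strongly normalizing for $\to_{\lambda j/{\tt CS}}$, resp. $\to_{\lambda j/{\tt o}}$).
   Context: $\mathcal T$ is the set of $\lambda j$-terms, generated by $t,u::= x\mid \lambda x.t\mid t\,u\mid t[x/u]$; $\lambda x.t$ and $t[x/u]$ bind $x$ in $t$ (not in $u$), and terms are considered modulo $\alpha$-conversion. $\lambda$-terms are those without jumps. $\mathrm{fv}(t)$ is the set of free variables, $t\{x/u\}$ is capture-avoiding meta-level substitution, and $|t|_x$ is the number of free occurrences of $x$ in $t$. If $|t|_x=n\ge2$, $t_{[y]_x}$ denotes any term obtained from $t$ by replacing $k$ of the free occurrences of $x$ by a fresh variable $y$, for some $1\le k\le n-1$. ${\tt L}$ denotes a (possibly empty) list of jumps $[x_1/u_1]\dots[x_k/u_k]$. The rewriting rules, closed under all contexts, are: $({\tt dB})$ $(\lambda x.t){\tt L}\,u\to t[x/u]{\tt L}$ where no $x_i$ of ${\tt L}$ is free in $u$; $({\tt w})$ $t[x/u]\to t$ if $|t|_x=0$; $({\tt d})$ $t[x/u]\to t\{x/u\}$ if $|t|_x=1$; $({\tt c})$ $t[x/u]\to t_{[y]_x}[x/u][y/u]$ if $|t|_x\ge2$, $y$ fresh. $\to_{\lambda j}$ is the union of all four. $\equiv_{\tt CS}$ is the smallest equivalence closed under contexts containing $t[x/s][y/v]\sim t[y/v][x/s]$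 whenever $x\notin\mathrm{fv}(v)$ and $y\notin\mathrm{fv}(s)$. $\equiv_{\tt o}$ is the smallest equivalence closed under contexts containing that equation together with $\lambda y.(t[x/s])\sim(\lambda y.t)[x/s]$ if $y\notin\mathrm{fv}(s)$, and $t[x/s]\,v\sim(t\,v)[x/s]$ if $x\notin\mathrm{fv}(v)$. For an equivalence ${\tt E}$, $t\to_{\lambda j/{\tt E}}u$ iff $t\equiv_{\tt E}t'\to_{\lambda j}u'\equiv_{\tt E}u$ for some $t',u'$. $\beta$-reduction is the contextual closure of $(\lambda x.t)u\to t\{x/u\}$. *)

theory Defs
  imports Main
begin

text \<open>lambda-j terms modulo alpha-conversion, represented with de Bruijn indices.
  Sub t u stands for t[x/u]: it binds index 0 in t (not in u).\<close>

datatype trm = Var nat | Lam trm | App trm trm | Sub trm trm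

fun lift :: "nat \<Rightarrow> trm \<Rightarrow> trm" where
  "lift k (Var i) = (if i < k then Var i else Var (Suc i))"
| "lift k (Lam t) = Lam (lift (Suc k) t)"
| "lift k (App t u) = App (lift k t) (lift k u)"
| "lift k (Sub t u) = Sub (lift (Suc k) t) (lift k u)"

fun subst :: "trm \<Rightarrow> nat \<Rightarrow> trm \<Rightarrow> trm" where
  "subst (Var i) k u = (if i < k then Var i else if i = k then u else Var (i - 1))"
| "subst (Lam t) k u = Lam (subst t (Suc k) (lift 0 u))"
| "subst (App t s) k u = App (subst t k u) (subst s k u)"
| "subst (Sub t s) k u = Sub (subst t (Suc k) (lift 0 u)) (subst s k u)"

fun occ :: "nat \<Rightarrow> trm \<Rightarrow> nat" where
  "occ k (Var i) = (if i = k then 1 else 0)"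
| "occ k (Lam t) = occ (Suc k) t"
| "occ k (App t u) = occ k t + occ k u"
| "occ k (Sub t u) = occ (Suc k) t + occ k u"

fun sw :: "nat \<Rightarrow> trm \<Rightarrow> trm" where
  "sw k (Var i) = (if i = k then Var (Suc k) else if i = Suc k then Var k else Var i)"
| "sw k (Lam t) = Lam (sw (Suc k) t)"
| "sw k (App t u) = App (sw k t) (sw k u)"
| "sw k (Sub t u) = Sub (sw (Suc k) t) (sw k u)"

inductive ren :: "nat \<Rightarrow> nat \<Rightarrow> trm \<Rightarrow> trm \<Rightarrow> bool" where
  ren_keep: "ren x y (Var i) (Var i)"
| ren_repl: "ren x y (Var x) (Var y)"
| ren_Lam: "ren (Suc x) (Suc y) t s \<Longrightarrow> ren x y (Lam t) (Lam s)"
| ren_App: "ren x y t s \<Longrightarrow> ren x y u v \<Longrightarrow> ren x y (App t u) (App s v)"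
| ren_Sub: "ren (Suc x) (Suc y) t s \<Longrightarrow> ren x y u v \<Longrightarrow> ren x y (Sub t u) (Sub s v)"

text \<open>t L for a list of jumps L = [x1/u1]...[xk/uk] (u1 is the innermost argument).\<close>
fun subs :: "trm \<Rightarrow> trm list \<Rightarrow> trm" where
  "subs t [] = t"
| "subs t (u # us) = subs (Sub t u) us"

inductive lj_root :: "trm \<Rightarrow> trm \<Rightarrow> bool" where
  dB: "lj_root (App (subs (Lam t) L) u) (subs (Sub t ((lift 0 ^^ length L) u)) L)"
| w: "occ 0 t = 0 \<Longrightarrow> lj_root (Sub t u) (subst t 0 u)"
| d: "occ 0 t = 1 \<Longrightarrow> lj_root (Sub t u) (subst t 0 u)"
| c: "occ 0 t \<ge> 2 \<Longrightarrow> ren 0 1 (lift 1 t) s \<Longrightarrow> occ 0 s \<ge> 1 \<Longrightarrow> occ 1 s \<ge> 1 \<Longrightarrow>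
      lj_root (Sub t u) (Sub (Sub s (lift 0 u)) u)"

inductive ctx :: "(trm \<Rightarrow> trm \<Rightarrow> bool) \<Rightarrow> trm \<Rightarrow> trm \<Rightarrow> bool" for r where
  ctx_root: "r t u \<Longrightarrow> ctx r t u"
| ctx_Lam: "ctx r t u \<Longrightarrow> ctx r (Lam t) (Lam u)"
| ctx_AppL: "ctx r t u \<Longrightarrow> ctx r (App t s) (App u s)"
| ctx_AppR: "ctx r t u \<Longrightarrow> ctx r (App s t) (App s u)"
| ctx_SubL: "ctx r t u \<Longrightarrow> ctx r (Sub t s) (Sub u s)"
| ctx_SubR: "ctx r t u \<Longrightarrow> ctx r (Sub s t) (Sub s u)"

definition lj :: "trm \<Rightarrow> trm \<Rightarrow> bool" where
  "lj = ctx lj_root"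

text \<open>The equations. CS: t[x/s][y/v] ~ t[y/v][x/s] (x not free in v, y not free in s).\<close>
inductive CS_ax :: "trm \<Rightarrow> trm \<Rightarrow> bool" where
  "CS_ax (Sub (Sub t (lift 0 s)) v) (Sub (Sub (sw 0 t) (lift 0 v)) s)"

text \<open>o: CS together with lambda y.(t[x/s]) ~ (lambda y.t)[x/s] (y not free in s)
  and t[x/s] v ~ (t v)[x/s] (x not free in v).\<close>
inductive o_ax :: "trm \<Rightarrow> trm \<Rightarrow> bool" where
  o_CS: "CS_ax t u \<Longrightarrow> o_ax t u"
| o_Lam: "o_ax (Lam (Sub t (lift 0 s))) (Sub (Lam (sw 0 t)) s)"
| o_App: "o_ax (App (Sub t s) v) (Sub (App t (lift 0 v)) s)"

definition eqCS :: "trm \<Rightarrow> trm \<Rightarrow> bool" where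
  "eqCS = equivclp (ctx CS_ax)"

definition eqo :: "trm \<Rightarrow> trm \<Rightarrow> bool" where
  "eqo = equivclp (ctx o_ax)"

definition lj_mod :: "(trm \<Rightarrow> trm \<Rightarrow> bool) \<Rightarrow> trm \<Rightarrow> trm \<Rightarrow> bool" where
  "lj_mod E t u \<longleftrightarrow> (\<exists>t' u'. E t t' \<and> lj t' u' \<and> E u' u)"

inductive beta :: "trm \<Rightarrow> trm \<Rightarrow> bool" where
  beta_root: "beta (App (Lam t) u) (subst t 0 u)"
| beta_Lam: "beta t u \<Longrightarrow> beta (Lam t) (Lam u)"
| beta_AppL: "beta t u \<Longrightarrow> beta (App t s) (App u s)"
| beta_AppR: "beta t u \<Longrightarrow> beta (App s t) (App s u)"

fun is_lambda :: "trm \<Rightarrow> bool" where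
  "is_lambda (Var i) = True"
| "is_lambda (Lam t) = is_lambda t"
| "is_lambda (App t u) = (is_lambda t \<and> is_lambda u)"
| "is_lambda (Sub t u) = False"

definition SN :: "('a \<Rightarrow> 'a \<Rightarrow> bool) \<Rightarrow> 'a \<Rightarrow> bool" where
  "SN r a \<longleftrightarrow> Wellfounded.accp (\<lambda>y x. r x y) a"

definition confluent_mod :: "('a \<Rightarrow> 'a \<Rightarrow> bool) \<Rightarrow> ('a \<Rightarrow> 'a \<Rightarrow> bool) \<Rightarrow> bool" where
  "confluent_mod E r \<longleftrightarrow> (\<forall>t u1 u2. r\<^sup>*\<^sup>* t u1 \<and> r\<^sup>*\<^sup>* t u2 \<longrightarrow>
      (\<exists>v1 v2. r\<^sup>*\<^sup>* u1 v1 \<and> r\<^sup>*\<^sup>* u2 v2 \<and> E v1 v2))"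

definition PSN :: "(trm \<Rightarrow> trm \<Rightarrow> bool) \<Rightarrow> bool" where
  "PSN r \<longleftrightarrow> (\<forall>t. is_lambda t \<longrightarrow> SN beta t \<longrightarrow> SN r t)"

end

theory Submission
  imports Defs "HOL-Library.Multiset"
begin

(* The full expansion  expand t  replaces every jump t[x/u] by the meta-level
   substitution t{x/u}.  It is invariant under the o-equations (hence under CS, which is
   contained in o), every lambda-j step projects onto a (possibly empty) sequence of
   beta-steps between expansions, and conversely t reduces to  expand t  and beta-steps are
   simulated by lambda-j.  Confluence of beta on lambda-terms (Tait--Martin-Loef, via
   parallel reduction and complete developments) then lifts to lambda-j/E for E = CS, o.

   We use a system of non-idempotent intersection types for lambda-j whose
   derivations carry a pair of natural numbers (a, b): a counts the variable, abstraction
   and application nodes, b adds |M|^2 for every jump typed with the multiset M.  Every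
   lambda-j step strictly decreases (a, b) lexicographically (subject reduction), every
   o-equation does not increase either component, so typable terms are strongly
   normalising for lambda-j/o.  Conversely every beta-strongly-normalising lambda-term is
   typable (subject expansion along a size/reduction induction on lambda-terms), which
   gives PSN for lambda-j/o and, as CS-steps are o-steps, for lambda-j/CS. *)

section \<open>De Bruijn arithmetic\<close>

lemma lift_lift:
  "i \<le> k \<Longrightarrow> lift (Suc k) (lift i t) = lift i (lift k t)"
  by (induct t arbitrary: i k) auto

lemma lift_subst [simp]:
  "j \<le> i \<Longrightarrow> lift i (subst t j s) = subst (lift (Suc i) t) j (lift i s)"
  by (induct t arbitrary: i j s) (auto simp: lift_lift)

lemma lift_subst_lt:
  "i \<le> j \<Longrightarrow> lift i (subst t j s) = subst (lift i t) (Suc j) (lift i s)"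
  by (induct t arbitrary: i j s) (auto simp: lift_lift)

lemma subst_lift [simp]: "subst (lift k t) k s = t"
  by (induct t arbitrary: k s) auto

lemma subst_subst:
  "i \<le> j \<Longrightarrow> subst (subst t (Suc j) (lift i v)) i (subst u j v) = subst (subst t i u) j v"
  by (induct t arbitrary: i j u v)
     (auto simp: lift_lift [symmetric] lift_subst_lt)

lemma sw_lift: "j \<le> k \<Longrightarrow> sw (Suc k) (lift j t) = lift j (sw k t)"
  by (induct t arbitrary: j k) auto

lemma sw_subst: "j \<le> k \<Longrightarrow> sw k (subst A j B) = subst (sw (Suc k) A) j (sw k B)"
  by (induct A arbitrary: j k B) (auto simp: sw_lift)

lemma sw_sw [simp]: "sw k (sw k t) = t"
  by (induct t arbitrary: k) auto

text \<open>The meta-level content of the equation CS: two independent substitutions commute.\<close>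
lemma subst_commute_sw:
  "subst (subst T k (lift k S)) k V = subst (subst (sw k T) k (lift k V)) k S"
  by (induct T arbitrary: k S V) (auto simp: lift_lift[of 0, simplified, symmetric])

text \<open>The meta-level content of the equation lambda y.(t[x/s]) = (lambda y.t)[x/s].\<close>
lemma subst_under_binder_sw: "subst T k (lift k S) = subst (sw k T) (Suc k) (lift k S)"
  by (induct T arbitrary: k S) (auto simp: lift_lift[of 0, simplified, symmetric])

lemma occ_lift_eq [simp]: "occ k (lift k t) = 0"
  by (induct t arbitrary: k) auto

lemma occ_lift_lt: "j < k \<Longrightarrow> occ j (lift k t) = occ j t"
  by (induct t arbitrary: j k) auto

lemma occ_subst_lift: "occ j (subst S j (lift j U)) = occ (Suc j) S"
  by (induct S arbitrary: j U) (auto simp: lift_lift[of 0, simplified, symmetric])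

lemma lift_eqs:
  "Var i = lift k t \<longleftrightarrow> (\<exists>j. t = Var j \<and> i = (if j < k then j else Suc j))"
  "Lam s = lift k t \<longleftrightarrow> (\<exists>t0. t = Lam t0 \<and> s = lift (Suc k) t0)"
  "App s1 s2 = lift k t \<longleftrightarrow> (\<exists>t1 t2. t = App t1 t2 \<and> s1 = lift k t1 \<and> s2 = lift k t2)"
  "Sub s1 s2 = lift k t \<longleftrightarrow> (\<exists>t1 t2. t = Sub t1 t2 \<and> s1 = lift (Suc k) t1 \<and> s2 = lift k t2)"
  by (cases t; auto)+

lemma subs_snoc: "subs h (L @ [v]) = Sub (subs h L) v"
  by (induct L arbitrary: h) auto

lemma is_lambda_lift [simp]: "is_lambda (lift k t) = is_lambda t"
  by (induct t arbitrary: k) auto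

lemma is_lambda_subst: "is_lambda t \<Longrightarrow> is_lambda u \<Longrightarrow> is_lambda (subst t k u)"
  by (induct t arbitrary: k u) auto

section \<open>Partial renamings of one variable\<close>

inductive_cases ren_cases:
  "ren x y (Var i) s"
  "ren x y (Lam t) s"
  "ren x y (App t u) s"
  "ren x y (Sub t u) s"

lemma ren_refl: "ren x y t t"
  by (induct t arbitrary: x y) (auto intro: ren.intros)

lemma ren_lift: "ren x y b b' \<Longrightarrow> k \<le> x \<Longrightarrow> k \<le> y \<Longrightarrow> ren (Suc x) (Suc y) (lift k b) (lift k b')"
  by (induct arbitrary: k rule: ren.induct) (auto intro!: ren.intros)

lemma ren_subst: "ren x y a a' \<Longrightarrow> k < x \<Longrightarrow> k < y \<Longrightarrow> ren (x - 1) (y - 1) b b' \<Longrightarrow>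
   ren (x - 1) (y - 1) (subst a k b) (subst a' k b')"
proof (induct arbitrary: k b b' rule: ren.induct)
  case (ren_keep x y i)
  then show ?case by (auto intro: ren.intros)
next
  case (ren_repl x y)
  then show ?case using ren.ren_repl by auto
next
  case (ren_Lam x y t s)
  have "ren (Suc x - 1) (Suc y - 1) (lift 0 b) (lift 0 b')"
    using ren_lift[OF ren_Lam.prems(3)] ren_Lam.prems by simp
  with ren_Lam show ?case by (auto intro!: ren.intros)
next
  case (ren_App x y t s u v)
  then show ?case by (auto intro!: ren.intros)
next
  case (ren_Sub x y t s u v)
  have "ren (Suc x - 1) (Suc y - 1) (lift 0 b) (lift 0 b')"
    using ren_lift[OF ren_Sub.prems(3)] ren_Sub.prems by simp
  with ren_Sub show ?case by (auto intro!: ren.intros)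
qed

text \<open>Merging back the two copies x, x+1 of a variable created by a renaming: this is
  why the rule c is sound with respect to meta-level substitution.\<close>
lemma ren_merge: "ren k (Suc k) (lift (Suc k) T) S \<Longrightarrow>
  subst (subst S k (lift k U)) k U = subst T k U"
proof (induct T arbitrary: k S U)
  case (Lam T)
  from Lam.prems obtain S' where "S = Lam S'" "ren (Suc k) (Suc (Suc k)) (lift (Suc (Suc k)) T) S'"
    by (auto elim!: ren_cases)
  with Lam.hyps[of "Suc k" _ "lift 0 U"] show ?case
    by (simp add: lift_lift[of 0, simplified, symmetric])
next
  case (Sub T1 T2)
  from Sub.prems obtain S1 S2 where "S = Sub S1 S2"
    "ren (Suc k) (Suc (Suc k)) (lift (Suc (Suc k)) T1) S1" "ren k (Suc k) (lift (Suc k) T2) S2"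
    by (auto elim!: ren_cases)
  with Sub.hyps(1)[of "Suc k" _ "lift 0 U"] Sub.hyps(2) show ?case
    by (simp add: lift_lift[of 0, simplified, symmetric])
qed (auto elim!: ren_cases)

text \<open>Any occurrence of x can be renamed to a fresh y: the premise needed to apply c.\<close>
lemma ren_exists: "occ x t \<ge> 1 \<Longrightarrow> x \<noteq> y \<Longrightarrow>
  \<exists>s. ren x y t s \<and> Suc (occ x s) = occ x t \<and> occ y s = Suc (occ y t)"
proof (induct t arbitrary: x y)
  case (Var i)
  then show ?case using ren.ren_repl[of x y] by (intro exI[of _ "Var y"]) (simp split: if_splits)
next
  case (Lam t)
  have "occ (Suc x) t \<ge> 1" "Suc x \<noteq> Suc y" using Lam.prems by simp_all
  from Lam.hyps[OF this] obtain s where "ren (Suc x) (Suc y) t s"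
    "Suc (occ (Suc x) s) = occ (Suc x) t" "occ (Suc y) s = Suc (occ (Suc y) t)" by blast
  then show ?case using ren.ren_Lam by (intro exI[of _ "Lam s"]) simp
next
  case (App t1 t2)
  show ?case
  proof (cases "occ x t1 \<ge> 1")
    case True
    with App obtain s where "ren x y t1 s" "Suc (occ x s) = occ x t1" "occ y s = Suc (occ y t1)"
      by blast
    then show ?thesis using ren.ren_App[OF _ ren_refl] by (intro exI[of _ "App s t2"]) simp
  next
    case False
    then have "occ x t2 \<ge> 1" using App.prems by simp
    with App obtain s where "ren x y t2 s" "Suc (occ x s) = occ x t2" "occ y s = Suc (occ y t2)"
      by blast
    then show ?thesis using False ren.ren_App[OF ren_refl] by (intro exI[of _ "App t1 s"]) simp
  qed
next
  case (Sub t1 t2)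
  show ?case
  proof (cases "occ (Suc x) t1 \<ge> 1")
    case True
    moreover have "Suc x \<noteq> Suc y" using Sub.prems by simp
    ultimately obtain s where "ren (Suc x) (Suc y) t1 s" "Suc (occ (Suc x) s) = occ (Suc x) t1"
      "occ (Suc y) s = Suc (occ (Suc y) t1)" using Sub.hyps(1) by blast
    then show ?thesis using ren.ren_Sub[OF _ ren_refl] by (intro exI[of _ "Sub s t2"]) simp
  next
    case False
    then have "occ x t2 \<ge> 1" using Sub.prems by simp
    with Sub obtain s where "ren x y t2 s" "Suc (occ x s) = occ x t2" "occ y s = Suc (occ y t2)"
      by blast
    then show ?thesis using False ren.ren_Sub[OF ren_refl] by (intro exI[of _ "Sub t1 s"]) simp
  qed
qed


section \<open>Confluence of beta on lambda-terms\<close>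

text \<open>Parallel beta-reduction (extended to jumps, which are only traversed) and the
  complete development  cd: the Tait--Martin-Loef proof of confluence.\<close>

inductive par :: "trm \<Rightarrow> trm \<Rightarrow> bool" where
  pVar [simp, intro!]: "par (Var n) (Var n)"
| pLam [simp, intro!]: "par s t \<Longrightarrow> par (Lam s) (Lam t)"
| pApp [simp, intro!]: "par s s' \<Longrightarrow> par t t' \<Longrightarrow> par (App s t) (App s' t')"
| pSub [simp, intro!]: "par s s' \<Longrightarrow> par t t' \<Longrightarrow> par (Sub s t) (Sub s' t')"
| pBeta [simp, intro!]: "par s s' \<Longrightarrow> par t t' \<Longrightarrow> par (App (Lam s) t) (subst s' 0 t')"

inductive_cases par_cases [elim!]:
  "par (Var n) t"
  "par (Lam s) t"
  "par (Sub s t) u"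

lemma par_App_cases:
  assumes "par (App t1 t2) t'"
  obtains (app) a b where "t' = App a b" "par t1 a" "par t2 b"
  | (beta) a a' b where "t1 = Lam a" "par a a'" "par t2 b" "t' = subst a' 0 b"
  using assms by (cases rule: par.cases) auto

lemma par_refl [simp]: "par t t"
  by (induct t) auto

lemma par_lift [simp]: "par t t' \<Longrightarrow> par (lift n t) (lift n t')"
  by (induct t arbitrary: t' n) (fastforce elim: par_App_cases)+

lemma par_subst:
  "par s s' \<Longrightarrow> par t t' \<Longrightarrow> par (subst t n s) (subst t' n s')"
proof (induct t arbitrary: s s' t' n)
  case (App t1 t2)
  from App.prems(2) show ?case
  proof (cases rule: par_App_cases)
    case app
    then show ?thesis using App by simp
  next
    case (beta a a' b)
    have "par (subst a (Suc n) (lift 0 s)) (subst a' (Suc n) (lift 0 s'))"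
      using App.hyps(1)[OF App.prems(1), of "Lam a'"] beta by auto
    moreover have "par (subst t2 n s) (subst b n s')" using App beta by simp
    ultimately have "par (subst (App t1 t2) n s)
        (subst (subst a' (Suc n) (lift 0 s')) 0 (subst b n s'))"
      using beta by simp
    then show ?thesis using beta by (simp add: subst_subst[of 0 n, simplified])
  qed
qed auto

fun cd :: "trm \<Rightarrow> trm" where
  "cd (Var n) = Var n"
| "cd (App (Lam u) t) = subst (cd u) 0 (cd t)"
| "cd (App s t) = App (cd s) (cd t)"
| "cd (Lam s) = Lam (cd s)"
| "cd (Sub s t) = Sub (cd s) (cd t)"

lemma par_cd: "par s t \<Longrightarrow> par t (cd s)"
proof (induct s arbitrary: t rule: cd.induct)
  case (2 u s)
  from "2.prems" show ?case
  proof (cases rule: par_App_cases)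
    case (app a b)
    then obtain a' where "a = Lam a'" "par u a'" by blast
    then show ?thesis using 2 app by force
  next
    case (beta a a' b)
    then show ?thesis using 2 by (force intro: par_subst)
  qed
qed (auto elim!: par_App_cases)

lemma par_strip: "par\<^sup>*\<^sup>* t u1 \<Longrightarrow> par t u2 \<Longrightarrow> \<exists>w. par u1 w \<and> par\<^sup>*\<^sup>* u2 w"
proof (induct arbitrary: u2 rule: rtranclp_induct)
  case base then show ?case by blast
next
  case (step y z)
  then obtain w where "par y w" "par\<^sup>*\<^sup>* u2 w" by metis
  with par_cd[OF step(2)] par_cd[of y w] show ?case by (meson rtranclp.rtrancl_into_rtrancl)
qed

lemma par_confluent: "par\<^sup>*\<^sup>* t u2 \<Longrightarrow> par\<^sup>*\<^sup>* t u1 \<Longrightarrow> \<exists>w. par\<^sup>*\<^sup>* u1 w \<and> par\<^sup>*\<^sup>* u2 w"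
proof (induct rule: rtranclp_induct)
  case base then show ?case by blast
next
  case (step y z)
  then obtain w where "par\<^sup>*\<^sup>* u1 w" "par\<^sup>*\<^sup>* y w" by metis
  with par_strip[OF this(2) step(2)] show ?case by (meson rtranclp.rtrancl_into_rtrancl)
qed

lemma beta_rtr_Lam: "beta\<^sup>*\<^sup>* s s' \<Longrightarrow> beta\<^sup>*\<^sup>* (Lam s) (Lam s')"
  by (induct rule: rtranclp_induct) (auto intro: rtranclp.rtrancl_into_rtrancl beta.intros)

lemma beta_rtr_AppL: "beta\<^sup>*\<^sup>* s s' \<Longrightarrow> beta\<^sup>*\<^sup>* (App s t) (App s' t)"
  by (induct rule: rtranclp_induct) (auto intro: rtranclp.rtrancl_into_rtrancl beta.intros)

lemma beta_rtr_AppR: "beta\<^sup>*\<^sup>* s s' \<Longrightarrow> beta\<^sup>*\<^sup>* (App t s) (App t s')"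
  by (induct rule: rtranclp_induct) (auto intro: rtranclp.rtrancl_into_rtrancl beta.intros)

lemma beta_rtr_App: "beta\<^sup>*\<^sup>* s s' \<Longrightarrow> beta\<^sup>*\<^sup>* t t' \<Longrightarrow> beta\<^sup>*\<^sup>* (App s t) (App s' t')"
  by (meson beta_rtr_AppL beta_rtr_AppR rtranclp_trans)

lemma par_lambda_beta: "par t u \<Longrightarrow> is_lambda t \<Longrightarrow> is_lambda u \<and> beta\<^sup>*\<^sup>* t u"
proof (induct rule: par.induct)
  case (pBeta s s' t t')
  then have "beta\<^sup>*\<^sup>* (App (Lam s) t) (App (Lam s') t')" by (auto intro: beta_rtr_App beta_rtr_Lam)
  with pBeta show ?case by (auto intro: rtranclp.rtrancl_into_rtrancl beta.intros is_lambda_subst)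
qed (auto intro: beta_rtr_App beta_rtr_Lam)

lemma beta_lambda: "beta t u \<Longrightarrow> is_lambda t \<Longrightarrow> is_lambda u"
  by (induct rule: beta.induct) (auto intro: is_lambda_subst)

lemma beta_rtr_par: "beta\<^sup>*\<^sup>* t u \<Longrightarrow> par\<^sup>*\<^sup>* t u"
proof (induct rule: rtranclp_induct)
  case (step y z)
  moreover have "par y z" using step(2) by (induct rule: beta.induct) auto
  ultimately show ?case by (auto intro: rtranclp.rtrancl_into_rtrancl)
qed simp

lemma par_rtr_lambda_beta: "par\<^sup>*\<^sup>* t u \<Longrightarrow> is_lambda t \<Longrightarrow> is_lambda u \<and> beta\<^sup>*\<^sup>* t u"
  by (induct rule: rtranclp_induct) (auto dest: par_lambda_beta intro: rtranclp_trans)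

theorem beta_confluent: "is_lambda t \<Longrightarrow> beta\<^sup>*\<^sup>* t u1 \<Longrightarrow> beta\<^sup>*\<^sup>* t u2 \<Longrightarrow>
   \<exists>w. beta\<^sup>*\<^sup>* u1 w \<and> beta\<^sup>*\<^sup>* u2 w"
  by (meson beta_rtr_par par_confluent par_rtr_lambda_beta)

section \<open>Full expansion of jumps and confluence modulo CS and o\<close>

fun expand :: "trm \<Rightarrow> trm" where
  "expand (Var i) = Var i"
| "expand (Lam t) = Lam (expand t)"
| "expand (App t u) = App (expand t) (expand u)"
| "expand (Sub t u) = subst (expand t) 0 (expand u)"

lemma expand_lambda [simp]: "is_lambda (expand t)"
  by (induct t) (auto intro: is_lambda_subst)

lemma expand_lift [simp]: "expand (lift k t) = lift k (expand t)"
  by (induct t arbitrary: k) auto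

lemma expand_subst [simp]: "expand (subst t k u) = subst (expand t) k (expand u)"
  by (induct t arbitrary: k u) (auto simp: subst_subst[of 0, simplified])

lemma expand_sw [simp]: "expand (sw k t) = sw k (expand t)"
  by (induct t arbitrary: k) (auto simp: sw_subst)

lemma ren_expand: "ren x y t s \<Longrightarrow> ren x y (expand t) (expand s)"
proof (induct rule: ren.induct)
  case (ren_Sub x y t s u v)
  from ren_subst[OF ren_Sub(2), of 0 "expand u" "expand v"] ren_Sub(4)
  show ?case by simp
qed (auto intro: ren.intros)

lemma expand_o_ax: "o_ax t u \<Longrightarrow> expand t = expand u"
proof (induct rule: o_ax.induct)
  case (o_CS t u)
  then show ?case
  proof (cases rule: CS_ax.cases)
    case (1 t s v)
    show ?thesis unfolding 1 expand.simps expand_lift expand_sw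
      by (rule subst_commute_sw[where k=0])
  qed
next
  case (o_Lam t s)
  show ?case unfolding expand.simps expand_lift expand_sw subst.simps
    by (simp only: subst_under_binder_sw[where k=0] One_nat_def)
qed simp

lemma ctx_mono: "ctx r t u \<Longrightarrow> (\<And>a b. r a b \<Longrightarrow> r' a b) \<Longrightarrow> ctx r' t u"
  by (induct rule: ctx.induct) (auto intro: ctx.intros)

lemma ctx_converse: "ctx r t u \<Longrightarrow> ctx (\<lambda>x y. r y x) u t"
  by (induct rule: ctx.induct) (auto intro: ctx.intros)

lemma expand_ctx_o: "ctx o_ax t u \<Longrightarrow> expand t = expand u"
  by (induct rule: ctx.induct) (auto simp: expand_o_ax)

lemma expand_eqo: "eqo t u \<Longrightarrow> expand t = expand u"
  unfolding eqo_def
proof (induct rule: equivclp_induct)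
  case (step y z)
  then show ?case using expand_ctx_o by metis
qed simp

lemma eqCS_eqo: "eqCS t u \<Longrightarrow> eqo t u"
  unfolding eqCS_def eqo_def
proof (induct rule: equivclp_induct)
  case (step y z)
  then have "ctx o_ax y z \<or> ctx o_ax z y" by (meson ctx_mono o_ax.o_CS)
  then show ?case using step(3) by (meson equivclp_into_equivclp)
qed simp

lemma expand_subs: "\<exists>X. expand (subs (Lam t) L) = Lam X \<and>
   (\<forall>u. expand (subs (Sub t ((lift 0 ^^ length L) u)) L) = subst X 0 (expand u))"
proof (induct L rule: rev_induct)
  case (snoc v L)
  then obtain X where X: "expand (subs (Lam t) L) = Lam X"
    "\<And>u. expand (subs (Sub t ((lift 0 ^^ length L) u)) L) = subst X 0 (expand u)" by blast
  have "expand (subs (Lam t) (L @ [v])) = Lam (subst X (Suc 0) (lift 0 (expand v)))"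
    by (simp add: subs_snoc X)
  moreover have "expand (subs (Sub t ((lift 0 ^^ length (L @ [v])) u)) (L @ [v]))
     = subst (subst X (Suc 0) (lift 0 (expand v))) 0 (expand u)" for u
  proof -
    have "(lift 0 ^^ length (L @ [v])) u = (lift 0 ^^ length L) (lift 0 u)"
      by (simp only: length_append_singleton funpow_Suc_right comp_def)
    then have "expand (subs (Sub t ((lift 0 ^^ length (L @ [v])) u)) (L @ [v]))
        = subst (subst X 0 (lift 0 (expand u))) 0 (expand v)"
      by (simp add: subs_snoc X(2))
    also have "\<dots> = subst (subst X (Suc 0) (lift 0 (expand v))) 0 (expand u)"
      using subst_subst[of 0 0 X "expand v" "lift 0 (expand u)"] by simp
    finally show ?thesis .
  qed
  ultimately show ?case by blast
qed simp

lemma subst_beta: "beta r s \<Longrightarrow> beta (subst r i t) (subst s i t)"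
proof (induct arbitrary: i t rule: beta.induct)
  case (beta_root a b)
  have "beta (App (Lam (subst a (Suc i) (lift 0 t))) (subst b i t))
     (subst (subst a (Suc i) (lift 0 t)) 0 (subst b i t))"
    by (rule beta.beta_root)
  then show ?case by (simp add: subst_subst[of 0, simplified])
qed (auto intro: beta.intros)

lemma lift_beta: "beta r s \<Longrightarrow> beta (lift i r) (lift i s)"
proof (induct arbitrary: i rule: beta.induct)
  case (beta_root t u)
  have "beta (App (Lam (lift (Suc i) t)) (lift i u)) (subst (lift (Suc i) t) 0 (lift i u))"
    by (rule beta.beta_root)
  then show ?case by simp
qed (auto intro: beta.intros)

lemma subst_beta_arg: "is_lambda t \<Longrightarrow> beta r s \<Longrightarrow> beta\<^sup>*\<^sup>* (subst t i r) (subst t i s)"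
proof (induct t arbitrary: i r s)
  case (Lam t)
  then show ?case using lift_beta by (simp add: beta_rtr_Lam)
qed (auto intro: beta_rtr_App)

lemma subst_beta_rtr: "beta\<^sup>*\<^sup>* r s \<Longrightarrow> beta\<^sup>*\<^sup>* (subst r i t) (subst s i t)"
  by (induct rule: rtranclp_induct) (auto intro: rtranclp.rtrancl_into_rtrancl subst_beta)

lemma subst_beta_arg_rtr: "beta\<^sup>*\<^sup>* r s \<Longrightarrow> is_lambda t \<Longrightarrow> beta\<^sup>*\<^sup>* (subst t i r) (subst t i s)"
  by (induct rule: rtranclp_induct) (auto intro: rtranclp_trans subst_beta_arg)

lemma root_expand_beta: "lj_root t u \<Longrightarrow> beta\<^sup>*\<^sup>* (expand t) (expand u)"
proof (induct rule: lj_root.induct)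
  case (dB t L u)
  obtain X where X: "expand (subs (Lam t) L) = Lam X"
    "\<And>u. expand (subs (Sub t ((lift 0 ^^ length L) u)) L) = subst X 0 (expand u)"
    using expand_subs by blast
  show ?case by (simp add: X beta.beta_root r_into_rtranclp)
next
  case (c t s u)
  have "ren 0 1 (lift 1 (expand t)) (expand s)" using ren_expand[OF c(2)] by simp
  then show ?case using ren_merge[of 0 "expand t" "expand s" "expand u"] by simp
qed auto

lemma lj_expand_beta: "lj t u \<Longrightarrow> beta\<^sup>*\<^sup>* (expand t) (expand u)"
  unfolding lj_def
proof (induct rule: ctx.induct)
  case (ctx_SubL t u s) then show ?case by (simp add: subst_beta_rtr)
next
  case (ctx_SubR t u s) then show ?case by (simp add: subst_beta_arg_rtr)
qed (auto simp: root_expand_beta beta_rtr_Lam beta_rtr_AppL beta_rtr_AppR)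

lemma ctx_rtr_Lam: "(ctx r)\<^sup>*\<^sup>* t u \<Longrightarrow> (ctx r)\<^sup>*\<^sup>* (Lam t) (Lam u)"
  by (induct rule: rtranclp_induct) (auto intro: rtranclp.rtrancl_into_rtrancl ctx.intros)
lemma ctx_rtr_AppL: "(ctx r)\<^sup>*\<^sup>* t u \<Longrightarrow> (ctx r)\<^sup>*\<^sup>* (App t s) (App u s)"
  by (induct rule: rtranclp_induct) (auto intro: rtranclp.rtrancl_into_rtrancl ctx.intros)
lemma ctx_rtr_AppR: "(ctx r)\<^sup>*\<^sup>* t u \<Longrightarrow> (ctx r)\<^sup>*\<^sup>* (App s t) (App s u)"
  by (induct rule: rtranclp_induct) (auto intro: rtranclp.rtrancl_into_rtrancl ctx.intros)
lemma ctx_rtr_SubL: "(ctx r)\<^sup>*\<^sup>* t u \<Longrightarrow> (ctx r)\<^sup>*\<^sup>* (Sub t s) (Sub u s)"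
  by (induct rule: rtranclp_induct) (auto intro: rtranclp.rtrancl_into_rtrancl ctx.intros)
lemma ctx_rtr_SubR: "(ctx r)\<^sup>*\<^sup>* t u \<Longrightarrow> (ctx r)\<^sup>*\<^sup>* (Sub s t) (Sub s u)"
  by (induct rule: rtranclp_induct) (auto intro: rtranclp.rtrancl_into_rtrancl ctx.intros)

lemma lj_root_step: "lj_root t u \<Longrightarrow> lj t u"
  unfolding lj_def by (rule ctx_root)

text \<open>Full composition: a jump can always be executed by w, d and c steps.  By induction on
  the number of occurrences, using c to split off one occurrence and d to execute it.\<close>
lemma full_composition: "lj\<^sup>*\<^sup>* (Sub t u) (subst t 0 u)"
proof (induct "occ 0 t" arbitrary: t u rule: less_induct)
  case less
  show ?case
  proof (cases "occ 0 t \<le> 1")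
    case True
    then have "lj_root (Sub t u) (subst t 0 u)"
      using lj_root.w lj_root.d by (cases "occ 0 t") auto
    then show ?thesis by (simp add: lj_root_step r_into_rtranclp)
  next
    case False
    then obtain s where s: "ren 0 1 (lift 1 t) s" "Suc (occ 0 s) = occ 0 t" "occ 1 s = 1"
      using ren_exists[of 0 "lift 1 t" 1] occ_lift_lt[of 0 1 t] by auto
    let ?s' = "subst s 0 (lift 0 u)"
    have "lj (Sub t u) (Sub (Sub s (lift 0 u)) u)"
      using False s by (intro lj_root_step lj_root.c) auto
    moreover have "lj\<^sup>*\<^sup>* (Sub (Sub s (lift 0 u)) u) (Sub ?s' u)"
      using less s(2) unfolding lj_def by (intro ctx_rtr_SubL) (simp add: lj_def)
    moreover have "lj\<^sup>*\<^sup>* (Sub ?s' u) (subst ?s' 0 u)"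
      using less False s(3) occ_subst_lift[of 0 s u] by simp
    moreover have "subst ?s' 0 u = subst t 0 u" using ren_merge[of 0 t s u] s(1) by simp
    ultimately show ?thesis by (metis converse_rtranclp_into_rtranclp rtranclp_trans)
  qed
qed

lemma lj_to_expand: "lj\<^sup>*\<^sup>* t (expand t)"
proof (induct t)
  case (Lam t) then show ?case unfolding lj_def by (simp add: ctx_rtr_Lam)
next
  case (App t1 t2) then show ?case unfolding lj_def
    by (metis expand.simps(3) ctx_rtr_AppL ctx_rtr_AppR rtranclp_trans)
next
  case (Sub t1 t2)
  have "lj\<^sup>*\<^sup>* (Sub t1 t2) (Sub (expand t1) (expand t2))" using Sub unfolding lj_def
    by (metis ctx_rtr_SubL ctx_rtr_SubR rtranclp_trans)
  then show ?case using full_composition by (simp add: rtranclp_trans)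
qed simp

text \<open>Simulation of beta: dB followed by full composition.\<close>
lemma beta_lj: "beta t u \<Longrightarrow> lj\<^sup>*\<^sup>* t u"
proof (induct rule: beta.induct)
  case (beta_root t u)
  have "lj (App (Lam t) u) (Sub t u)" using lj_root.dB[of t "[]" u] by (simp add: lj_root_step)
  then show ?case using full_composition by (meson converse_rtranclp_into_rtranclp)
qed (simp_all add: lj_def ctx_rtr_Lam ctx_rtr_AppL ctx_rtr_AppR)

lemma beta_rtr_lj: "beta\<^sup>*\<^sup>* t u \<Longrightarrow> lj\<^sup>*\<^sup>* t u"
  by (induct rule: rtranclp_induct) (auto intro: rtranclp_trans beta_lj)

lemma confluent_mod_by_expansion:
  assumes expand_eq: "\<And>a b. E a b \<Longrightarrow> expand a = expand b" and E_refl: "\<And>a. E a a"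
  shows "confluent_mod E (lj_mod E)"
  unfolding confluent_mod_def
proof (intro allI impI)
  have to_beta: "beta\<^sup>*\<^sup>* (expand t) (expand u)" if "(lj_mod E)\<^sup>*\<^sup>* t u" for t u
    using that
  proof (induct rule: rtranclp_induct)
    case (step y z)
    then show ?case using expand_eq lj_expand_beta unfolding lj_mod_def
      by (metis rtranclp_trans)
  qed simp
  have from_lj: "(lj_mod E)\<^sup>*\<^sup>* t u" if "lj\<^sup>*\<^sup>* t u" for t u
    using that
  proof (induct rule: rtranclp_induct)
    case (step y z)
    have "lj_mod E y z" using step(2) E_refl unfolding lj_mod_def by blast
    with step(3) show ?case by (rule rtranclp.rtrancl_into_rtrancl)
  qed simp
  fix t u1 u2 assume "(lj_mod E)\<^sup>*\<^sup>* t u1 \<and> (lj_mod E)\<^sup>*\<^sup>* t u2"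
  then obtain w where "beta\<^sup>*\<^sup>* (expand u1) w" "beta\<^sup>*\<^sup>* (expand u2) w"
    using to_beta beta_confluent[OF expand_lambda] by meson
  then have "lj\<^sup>*\<^sup>* u1 w" "lj\<^sup>*\<^sup>* u2 w" using lj_to_expand beta_rtr_lj by (meson rtranclp_trans)+
  then show "\<exists>v1 v2. (lj_mod E)\<^sup>*\<^sup>* u1 v1 \<and> (lj_mod E)\<^sup>*\<^sup>* u2 v2 \<and> E v1 v2"
    using from_lj E_refl by blast
qed

theorem confluent_CS: "confluent_mod eqCS (lj_mod eqCS)"
proof (rule confluent_mod_by_expansion)
  show "expand a = expand b" if "eqCS a b" for a b using that by (intro expand_eqo eqCS_eqo)
  show "eqCS a a" for a by (simp add: eqCS_def)
qed

theorem confluent_o: "confluent_mod eqo (lj_mod eqo)"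
proof (rule confluent_mod_by_expansion)
  show "expand a = expand b" if "eqo a b" for a b using that by (rule expand_eqo)
  show "eqo a a" for a by (simp add: eqo_def)
qed

section \<open>Non-idempotent intersection types with a quantitative measure\<close>

datatype ty = Base | Arr "ty multiset" ty

type_synonym tenv = "nat \<Rightarrow> ty multiset"

text \<open>The empty environment, sum of environments, the environment x:{s}, and insertion,
  deletion and exchange of indices (mirroring  lift, subst  and  sw  on terms).\<close>

definition tenv0 :: tenv where "tenv0 = (\<lambda>_. {#})"
definition tplus :: "tenv \<Rightarrow> tenv \<Rightarrow> tenv" where "tplus G D = (\<lambda>i. G i + D i)"
definition tsingle :: "nat \<Rightarrow> ty \<Rightarrow> tenv" where "tsingle i s = (\<lambda>j. if j = i then {#s#} else {#})"
definition tins :: "nat \<Rightarrow> ty multiset \<Rightarrow> tenv \<Rightarrow> tenv" where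
  "tins k M G = (\<lambda>i. if i < k then G i else if i = k then M else G (i - 1))"
definition tdel :: "nat \<Rightarrow> tenv \<Rightarrow> tenv" where "tdel k G = (\<lambda>i. if i < k then G i else G (Suc i))"
definition tswap :: "nat \<Rightarrow> tenv \<Rightarrow> tenv" where
  "tswap k G = (\<lambda>i. if i = k then G (Suc k) else if i = Suc k then G k else G i)"

lemma tenv_app: "tenv0 i = {#}" "tplus G D i = G i + D i" "tsingle j s i = (if i = j then {#s#} else {#})"
  "tins k M G i = (if i < k then G i else if i = k then M else G (i - 1))"
  "tdel k G i = (if i < k then G i else G (Suc i))"
  "tswap k G i = (if i = k then G (Suc k) else if i = Suc k then G k else G i)"
  by (simp_all add: tenv0_def tplus_def tsingle_def tins_def tdel_def tswap_def)

lemmas tenv0_at = tenv_app(1) and tplus_at = tenv_app(2) and tsingle_at = tenv_app(3)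

lemma tins0_Suc [simp]: "tins 0 M G (Suc k) = G k" and tins0_0 [simp]: "tins 0 M G 0 = M"
  by (simp_all add: tenv_app)

lemma tplus_assoc: "tplus (tplus A B) C = tplus A (tplus B C)" by (rule ext) (simp add: tenv_app ac_simps)
lemma tplus_comm: "tplus A B = tplus B A" by (rule ext) (simp add: tenv_app ac_simps)
lemma tplus_lcomm: "tplus A (tplus B C) = tplus B (tplus A C)" by (rule ext) (simp add: tenv_app ac_simps)
lemma tplus_tenv0 [simp]: "tplus A tenv0 = A" "tplus tenv0 A = A" by (rule ext, simp add: tenv_app)+
lemma tins_tplus: "tins k (M + N) (tplus G D) = tplus (tins k M G) (tins k N D)" by (rule ext) (simp add: tenv_app)
lemma tins_tenv0 [simp]: "tins k {#} tenv0 = tenv0" by (rule ext) (simp add: tenv_app)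
lemma tdel_tplus: "tdel k (tplus G D) = tplus (tdel k G) (tdel k D)" by (rule ext) (simp add: tenv_app)
lemma tdel_tenv0 [simp]: "tdel k tenv0 = tenv0" by (rule ext) (simp add: tenv_app)
lemma tswap_tplus: "tswap k (tplus G D) = tplus (tswap k G) (tswap k D)" by (rule ext) (simp add: tenv_app)
lemma tins_tins0: "tins (Suc k) N (tins 0 M G) = tins 0 M (tins k N G)" by (rule ext) (auto simp: tenv_app)
lemma tdel_tins0: "tdel (Suc k) (tins 0 M G) = tins 0 M (tdel k G)" by (rule ext) (auto simp: tenv_app)
lemma tdel0_tins0 [simp]: "tdel 0 (tins 0 M G) = G" by (rule ext) (auto simp: tenv_app)
lemma tins_tdel: "tins k (G k) (tdel k G) = G" by (rule ext) (auto simp: tenv_app)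
lemma tswap_tins0: "tswap (Suc k) (tins 0 M G) = tins 0 M (tswap k G)" by (rule ext) (auto simp: tenv_app)
lemma tins_tsingle: "tins k {#} (tsingle i s) = tsingle (if i < k then i else Suc i) s" by (rule ext) (auto simp: tenv_app)
lemma tdel_tsingle: "i \<noteq> k \<Longrightarrow> tdel k (tsingle i s) = tsingle (if i < k then i else i - 1) s" by (rule ext) (auto simp: tenv_app)
lemma tdel_tsingle_eq [simp]: "tdel k (tsingle k s) = tenv0" by (rule ext) (auto simp: tenv_app)
lemma tswap_tsingle: "tswap k (tsingle i s) = tsingle (if i = k then Suc k else if i = Suc k then k else i) s"
  by (rule ext) (auto simp: tenv_app)

text \<open>An argument of an application or a jump whose multiset type is empty must nevertheless be
  typed, with some type (rules tApp0 and tSub0): erasable subterms are typed as well, which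
  is what makes typability imply strong normalisation.\<close>

inductive typing :: "tenv \<Rightarrow> trm \<Rightarrow> ty \<Rightarrow> nat \<Rightarrow> nat \<Rightarrow> bool"
  and mtyping :: "tenv \<Rightarrow> trm \<Rightarrow> ty multiset \<Rightarrow> nat \<Rightarrow> nat \<Rightarrow> bool" where
  tVar: "typing (tplus (tsingle i s) G) (Var i) s 1 0"
| tLam: "typing (tins 0 M G) t T a b \<Longrightarrow> typing G (Lam t) (Arr M T) (Suc a) b"
| tApp: "typing G t (Arr M T) a b \<Longrightarrow> mtyping D u M a' b' \<Longrightarrow> M \<noteq> {#} \<Longrightarrow>
     typing (tplus G D) (App t u) T (Suc (a + a')) (b + b')"
| tApp0: "typing G t (Arr {#} T) a b \<Longrightarrow> typing D u s a' b' \<Longrightarrow>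
     typing (tplus G D) (App t u) T (Suc (a + a')) (b + b')"
| tSub: "typing (tins 0 M G) t T a b \<Longrightarrow> mtyping D u M a' b' \<Longrightarrow> M \<noteq> {#} \<Longrightarrow>
     typing (tplus G D) (Sub t u) T (a + a') (b + b' + size M * size M)"
| tSub0: "typing (tins 0 {#} G) t T a b \<Longrightarrow> typing D u s a' b' \<Longrightarrow>
     typing (tplus G D) (Sub t u) T (a + a') (b + b')"
| sNil: "mtyping tenv0 u {#} 0 0"
| sAdd: "typing D1 u s a1 b1 \<Longrightarrow> mtyping D2 u M a2 b2 \<Longrightarrow>
     mtyping (tplus D1 D2) u (add_mset s M) (a1 + a2) (b1 + b2)"

definition atyping :: "tenv \<Rightarrow> trm \<Rightarrow> ty multiset \<Rightarrow> nat \<Rightarrow> nat \<Rightarrow> bool" where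
  "atyping D u M a b \<longleftrightarrow> (if M = {#} then (\<exists>s. typing D u s a b) else mtyping D u M a b)"

lemma typing_Var: "typing G (Var i) s a b \<longleftrightarrow> (\<exists>G'. G = tplus (tsingle i s) G') \<and> a = 1 \<and> b = 0"
  by (auto elim: typing.cases intro: typing_mtyping.tVar[of i s, simplified])

lemma typing_Lam: "typing G (Lam t) S a b \<longleftrightarrow> (\<exists>M T a1. S = Arr M T \<and> a = Suc a1 \<and> typing (tins 0 M G) t T a1 b)"
  by (auto elim: typing.cases intro: typing_mtyping.intros)

lemma typing_App: "typing G (App t u) T a b \<longleftrightarrow> (\<exists>M G1 D a1 b1 a2 b2. G = tplus G1 D \<and>
   typing G1 t (Arr M T) a1 b1 \<and> atyping D u M a2 b2 \<and> a = Suc (a1 + a2) \<and> b = b1 + b2)"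
  by (rule iffI, (erule typing.cases; simp add: atyping_def; blast))
     (auto simp: atyping_def split: if_splits intro: typing_mtyping.intros)

lemma typing_Sub: "typing G (Sub t u) T a b \<longleftrightarrow> (\<exists>M G1 D a1 b1 a2 b2. G = tplus G1 D \<and>
   typing (tins 0 M G1) t T a1 b1 \<and> atyping D u M a2 b2 \<and> a = a1 + a2 \<and> b = b1 + b2 + size M * size M)"
  by (rule iffI, (erule typing.cases; simp add: atyping_def; blast))
     (auto simp: atyping_def split: if_splits intro: typing_mtyping.intros)

lemma mtyping_empty: "mtyping D u {#} a b \<longleftrightarrow> D = tenv0 \<and> a = 0 \<and> b = 0"
  by (auto elim: mtyping.cases intro: typing_mtyping.intros)

lemma mtyping_pick: "mtyping D u N a b \<Longrightarrow> s \<in># N \<Longrightarrow> \<exists>D1 D2 a1 b1 a2 b2. D = tplus D1 D2 \<and>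
   typing D1 u s a1 b1 \<and> mtyping D2 u (N - {#s#}) a2 b2 \<and> a = a1 + a2 \<and> b = b1 + b2"
proof (induct rule: typing_mtyping.inducts(2)[where ?P1.0="\<lambda>_ _ _ _ _. True"])
  case (sAdd D1 u s' a1 b1 D2 M a2 b2)
  show ?case
  proof (cases "s = s'")
    case True
    then show ?thesis using sAdd(1,3) by (rule_tac exI[of _ D1], rule_tac exI[of _ D2]) (simp, blast)
  next
    case False
    then have "s \<in># M" using sAdd.prems by simp
    then obtain E1 E2 c1 d1 c2 d2 where E: "D2 = tplus E1 E2" "typing E1 u s c1 d1" "mtyping E2 u (M - {#s#}) c2 d2"
      "a2 = c1 + c2" "b2 = d1 + d2" using sAdd.hyps(4) by blast
    have "mtyping (tplus D1 E2) u (add_mset s' (M - {#s#})) (a1 + c2) (b1 + d2)"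
      using sAdd.hyps(1) E(3) by (rule typing_mtyping.sAdd)
    moreover have "add_mset s' (M - {#s#}) = add_mset s' M - {#s#}" using False by simp
    moreover have "tplus D1 D2 = tplus E1 (tplus D1 E2)" using E(1) by (simp add: tplus_lcomm)
    ultimately show ?thesis using E by (rule_tac exI[of _ E1], rule_tac exI[of _ "tplus D1 E2"])
       (simp, intro exI conjI, assumption, assumption, simp, simp)
  qed
qed auto

lemma mtyping_add: "mtyping D u (add_mset s M) a b \<longleftrightarrow> (\<exists>D1 D2 a1 b1 a2 b2. D = tplus D1 D2 \<and>
   typing D1 u s a1 b1 \<and> mtyping D2 u M a2 b2 \<and> a = a1 + a2 \<and> b = b1 + b2)"
proof
  assume "mtyping D u (add_mset s M) a b"
  from mtyping_pick[OF this, of s] show "\<exists>D1 D2 a1 b1 a2 b2. D = tplus D1 D2 \<and>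
   typing D1 u s a1 b1 \<and> mtyping D2 u M a2 b2 \<and> a = a1 + a2 \<and> b = b1 + b2" by simp
next
  assume "\<exists>D1 D2 a1 b1 a2 b2. D = tplus D1 D2 \<and>
   typing D1 u s a1 b1 \<and> mtyping D2 u M a2 b2 \<and> a = a1 + a2 \<and> b = b1 + b2"
  then show "mtyping D u (add_mset s M) a b" by (auto intro: typing_mtyping.intros)
qed

lemma mtyping_single: "mtyping D u {#s#} a b \<longleftrightarrow> typing D u s a b"
  by (auto simp: mtyping_add mtyping_empty intro: exI[of _ tenv0])

lemma mtyping_union: "mtyping D1 u M1 a1 b1 \<Longrightarrow> mtyping D2 u M2 a2 b2 \<Longrightarrow> mtyping (tplus D1 D2) u (M1 + M2) (a1 + a2) (b1 + b2)"
proof (induct M1 arbitrary: D1 a1 b1)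
  case empty then show ?case by (simp add: mtyping_empty)
next
  case (add s M1)
  from add.prems(1) obtain E1 E2 c1 d1 c2 d2 where E: "D1 = tplus E1 E2" "typing E1 u s c1 d1" "mtyping E2 u M1 c2 d2"
      "a1 = c1 + c2" "b1 = d1 + d2" by (auto simp: mtyping_add)
  have "mtyping (tplus E2 D2) u (M1 + M2) (c2 + a2) (d2 + b2)" using add.hyps E(3) add.prems(2) by blast
  from typing_mtyping.sAdd[OF E(2) this] show ?case using E by (simp add: tplus_assoc add.assoc)
qed

lemma mtyping_split: "mtyping D u (M1 + M2) a b \<Longrightarrow> \<exists>D1 D2 a1 b1 a2 b2. D = tplus D1 D2 \<and>
   mtyping D1 u M1 a1 b1 \<and> mtyping D2 u M2 a2 b2 \<and> a = a1 + a2 \<and> b = b1 + b2"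
proof (induct M1 arbitrary: D a b)
  case empty then show ?case by (auto simp: mtyping_empty intro!: exI[of _ tenv0])
next
  case (add s M1)
  from add.prems obtain E1 E2 c1 d1 c2 d2 where E: "D = tplus E1 E2" "typing E1 u s c1 d1" "mtyping E2 u (M1 + M2) c2 d2"
      "a = c1 + c2" "b = d1 + d2" by (auto simp: mtyping_add)
  from add.hyps[OF E(3)] obtain F1 F2 e1 f1 e2 f2 where F: "E2 = tplus F1 F2" "mtyping F1 u M1 e1 f1"
    "mtyping F2 u M2 e2 f2" "c2 = e1 + e2" "d2 = f1 + f2" by blast
  have "mtyping (tplus E1 F1) u (add_mset s M1) (c1 + e1) (d1 + f1)" using E(2) F(2) by (rule typing_mtyping.sAdd)
  then show ?case using E F by (rule_tac exI[of _ "tplus E1 F1"], rule_tac exI[of _ F2])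
     (simp add: tplus_assoc, intro exI conjI, assumption, assumption, simp, simp)
qed

text \<open>Weakening: the environment may be enlarged (types are not required to be used).\<close>
lemma typing_weaken: "typing G t T a b \<Longrightarrow> typing (tplus G H) t T a b"
proof (induct arbitrary: H rule: typing_mtyping.inducts(1)[where ?P2.0="\<lambda>_ _ _ _ _. True"])
  case (tVar i s G)
  then show ?case using typing_mtyping.tVar[of i s "tplus G H"] by (simp add: tplus_assoc)
next
  case (tLam M G t T a b)
  have "typing (tplus (tins 0 M G) (tins 0 {#} H)) t T a b" by (rule tLam.hyps)
  then have "typing (tins 0 M (tplus G H)) t T a b" using tins_tplus[of 0 M "{#}" G H] by simp
  then show ?case by (rule typing_mtyping.tLam)
next
  case (tApp G t M T a b D u a' b')
  have "typing (tplus (tplus G H) D) (App t u) T (Suc (a + a')) (b + b')"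
    using tApp.hyps(2)[of H] tApp.hyps(3,5) by (rule typing_mtyping.tApp)
  then show ?case by (simp add: tplus_assoc tplus_comm tplus_lcomm)
next
  case (tApp0 G t T a b D u s a' b')
  have "typing (tplus (tplus G H) D) (App t u) T (Suc (a + a')) (b + b')"
    using tApp0.hyps(2)[of H] tApp0.hyps(3) by (rule typing_mtyping.tApp0)
  then show ?case by (simp add: tplus_assoc tplus_comm tplus_lcomm)
next
  case (tSub M G t T a b D u a' b')
  have "typing (tplus (tins 0 M G) (tins 0 {#} H)) t T a b" by (rule tSub.hyps)
  then have "typing (tins 0 M (tplus G H)) t T a b" using tins_tplus[of 0 M "{#}" G H] by simp
  then have "typing (tplus (tplus G H) D) (Sub t u) T (a + a') (b + b' + size M * size M)"
    using tSub.hyps(3,5) by (rule typing_mtyping.tSub)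
  then show ?case by (simp add: tplus_assoc tplus_comm tplus_lcomm)
next
  case (tSub0 G t T a b D u s a' b')
  have "typing (tplus (tins 0 {#} G) (tins 0 {#} H)) t T a b" by (rule tSub0.hyps)
  then have "typing (tins 0 {#} (tplus G H)) t T a b" using tins_tplus[of 0 "{#}" "{#}" G H] by simp
  then have "typing (tplus (tplus G H) D) (Sub t u) T (a + a') (b + b')"
    using tSub0.hyps(3) by (rule typing_mtyping.tSub0)
  then show ?case by (simp add: tplus_assoc tplus_comm tplus_lcomm)
qed auto

lemma typing_weaken_le: "typing G t T a b \<Longrightarrow> (\<And>i. G i \<subseteq># G' i) \<Longrightarrow> typing G' t T a b"
proof -
  assume t: "typing G t T a b" and le: "\<And>i. G i \<subseteq># G' i"
  have "G' = tplus G (\<lambda>i. G' i - G i)" using le by (intro ext) (simp add: tenv_app subset_mset.add_diff_inverse)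
  then show ?thesis using typing_weaken[OF t] by metis
qed

lemma typing_lift: "typing G t T a b \<Longrightarrow> typing (tins k {#} G) (lift k t) T a b"
  "mtyping D u M a b \<Longrightarrow> mtyping (tins k {#} D) (lift k u) M a b"
proof (induct arbitrary: k and k rule: typing_mtyping.inducts)
  case (tVar i s G)
  have "tins k {#} (tplus (tsingle i s) G) = tplus (tsingle (if i < k then i else Suc i) s) (tins k {#} G)"
    using tins_tplus[of k "{#}" "{#}" "tsingle i s" G] by (simp add: tins_tsingle)
  then show ?case using typing_mtyping.tVar by (simp split: if_splits)
next
  case (tLam M G t T a b)
  have "typing (tins (Suc k) {#} (tins 0 M G)) (lift (Suc k) t) T a b" by (rule tLam.hyps)
  then show ?case by (simp add: tins_tins0 typing_mtyping.tLam)
next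
  case (tApp G t M T a b D u a' b')
  show ?case using typing_mtyping.tApp[OF tApp.hyps(2) tApp.hyps(4) tApp.hyps(5)]
    by (simp add: tins_tplus[of k "{#}" "{#}", simplified])
next
  case (tApp0 G t T a b D u s a' b')
  show ?case using typing_mtyping.tApp0[OF tApp0.hyps(2) tApp0.hyps(4)]
    by (simp add: tins_tplus[of k "{#}" "{#}", simplified])
next
  case (tSub M G t T a b D u a' b')
  have "typing (tins (Suc k) {#} (tins 0 M G)) (lift (Suc k) t) T a b" by (rule tSub.hyps)
  then have "typing (tins 0 M (tins k {#} G)) (lift (Suc k) t) T a b" by (simp add: tins_tins0)
  from typing_mtyping.tSub[OF this tSub.hyps(4) tSub.hyps(5)] show ?case
    by (simp add: tins_tplus[of k "{#}" "{#}", simplified])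
next
  case (tSub0 G t T a b D u s a' b')
  have "typing (tins (Suc k) {#} (tins 0 {#} G)) (lift (Suc k) t) T a b" by (rule tSub0.hyps)
  then have "typing (tins 0 {#} (tins k {#} G)) (lift (Suc k) t) T a b" by (simp add: tins_tins0)
  from typing_mtyping.tSub0[OF this tSub0.hyps(4)] show ?case
    by (simp add: tins_tplus[of k "{#}" "{#}", simplified])
next
  case (sNil u)
  then show ?case by (simp add: typing_mtyping.sNil)
next
  case (sAdd D1 u s a1 b1 D2 M a2 b2)
  show ?case using typing_mtyping.sAdd[OF sAdd.hyps(2) sAdd.hyps(4)]
    by (simp add: tins_tplus[of k "{#}" "{#}", simplified])
qed

lemma typing_unlift: "typing G s T a b \<Longrightarrow> s = lift k t \<Longrightarrow> typing (tdel k G) t T a b"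
  "mtyping D s M a b \<Longrightarrow> s = lift k t \<Longrightarrow> mtyping (tdel k D) t M a b"
proof (induct arbitrary: k t and k t rule: typing_mtyping.inducts)
  case (tVar i s G)
  then obtain j where j: "t = Var j" "i = (if j < k then j else Suc j)" by (auto simp: lift_eqs)
  then have "tdel k (tplus (tsingle i s) G) = tplus (tsingle j s) (tdel k G)"
    by (auto simp: tdel_tplus tdel_tsingle)
  then show ?case using j typing_mtyping.tVar by simp
next
  case (tLam M G t0 T a b)
  then obtain t1 where t: "t = Lam t1" "t0 = lift (Suc k) t1" by (auto simp: lift_eqs)
  have "typing (tdel (Suc k) (tins 0 M G)) t1 T a b" using tLam.hyps(2) t by blast
  then show ?case using t by (simp add: tdel_tins0 typing_mtyping.tLam)
next
  case (tApp G t0 M T a b D u a' b')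
  then obtain t1 t2 where t: "t = App t1 t2" "t0 = lift k t1" "u = lift k t2" by (auto simp: lift_eqs)
  from typing_mtyping.tApp[OF tApp.hyps(2)[OF t(2)] tApp.hyps(4)[OF t(3)] tApp.hyps(5)] show ?case
    using t by (simp add: tdel_tplus)
next
  case (tApp0 G t0 T a b D u s a' b')
  then obtain t1 t2 where t: "t = App t1 t2" "t0 = lift k t1" "u = lift k t2" by (auto simp: lift_eqs)
  from typing_mtyping.tApp0[OF tApp0.hyps(2)[OF t(2)] tApp0.hyps(4)[OF t(3)]] show ?case
    using t by (simp add: tdel_tplus)
next
  case (tSub M G t0 T a b D u a' b')
  then obtain t1 t2 where t: "t = Sub t1 t2" "t0 = lift (Suc k) t1" "u = lift k t2" by (auto simp: lift_eqs)
  have "typing (tdel (Suc k) (tins 0 M G)) t1 T a b" using tSub.hyps(2) t by blast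
  then have "typing (tins 0 M (tdel k G)) t1 T a b" by (simp add: tdel_tins0)
  from typing_mtyping.tSub[OF this tSub.hyps(4)[OF t(3)] tSub.hyps(5)] show ?case
    using t by (simp add: tdel_tplus)
next
  case (tSub0 G t0 T a b D u s a' b')
  then obtain t1 t2 where t: "t = Sub t1 t2" "t0 = lift (Suc k) t1" "u = lift k t2" by (auto simp: lift_eqs)
  have "typing (tdel (Suc k) (tins 0 {#} G)) t1 T a b" using tSub0.hyps(2) t by blast
  then have "typing (tins 0 {#} (tdel k G)) t1 T a b" by (simp add: tdel_tins0)
  from typing_mtyping.tSub0[OF this tSub0.hyps(4)[OF t(3)]] show ?case
    using t by (simp add: tdel_tplus)
next
  case (sNil u)
  then show ?case by (simp add: typing_mtyping.sNil)
next
  case (sAdd D1 u s a1 b1 D2 M a2 b2)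
  from typing_mtyping.sAdd[OF sAdd.hyps(2)[OF sAdd.prems] sAdd.hyps(4)[OF sAdd.prems]] show ?case
    by (simp add: tdel_tplus)
qed

lemma typing_sw: "typing G t T a b \<Longrightarrow> typing (tswap k G) (sw k t) T a b"
  "mtyping D u M a b \<Longrightarrow> mtyping (tswap k D) (sw k u) M a b"
proof (induct arbitrary: k and k rule: typing_mtyping.inducts)
  case (tVar i s G)
  have "tswap k (tplus (tsingle i s) G) = tplus (tsingle (if i = k then Suc k else if i = Suc k then k else i) s) (tswap k G)"
    by (simp add: tswap_tplus tswap_tsingle)
  then show ?case using typing_mtyping.tVar by simp
next
  case (tLam M G t T a b)
  have "typing (tswap (Suc k) (tins 0 M G)) (sw (Suc k) t) T a b" by (rule tLam.hyps)
  then show ?case by (simp add: tswap_tins0 typing_mtyping.tLam)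
next
  case (tApp G t M T a b D u a' b')
  show ?case using typing_mtyping.tApp[OF tApp.hyps(2) tApp.hyps(4) tApp.hyps(5)] by (simp add: tswap_tplus)
next
  case (tApp0 G t T a b D u s a' b')
  show ?case using typing_mtyping.tApp0[OF tApp0.hyps(2) tApp0.hyps(4)] by (simp add: tswap_tplus)
next
  case (tSub M G t T a b D u a' b')
  have "typing (tswap (Suc k) (tins 0 M G)) (sw (Suc k) t) T a b" by (rule tSub.hyps)
  then have "typing (tins 0 M (tswap k G)) (sw (Suc k) t) T a b" by (simp add: tswap_tins0)
  from typing_mtyping.tSub[OF this tSub.hyps(4) tSub.hyps(5)] show ?case by (simp add: tswap_tplus)
next
  case (tSub0 G t T a b D u s a' b')
  have "typing (tswap (Suc k) (tins 0 {#} G)) (sw (Suc k) t) T a b" by (rule tSub0.hyps)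
  then have "typing (tins 0 {#} (tswap k G)) (sw (Suc k) t) T a b" by (simp add: tswap_tins0)
  from typing_mtyping.tSub0[OF this tSub0.hyps(4)] show ?case by (simp add: tswap_tplus)
next
  case (sNil u)
  have "tswap k tenv0 = tenv0" by (rule ext) (simp add: tenv_app)
  then show ?case by (simp add: typing_mtyping.sNil)
next
  case (sAdd D1 u s a1 b1 D2 M a2 b2)
  show ?case using typing_mtyping.sAdd[OF sAdd.hyps(2) sAdd.hyps(4)] by (simp add: tswap_tplus)
qed

lemma le_mult_size: "M \<noteq> {#} \<Longrightarrow> (n::nat) \<le> n * size M"
  by (cases M) auto

lemma typing_occ: "typing G t T a b \<Longrightarrow> occ k t \<le> size (G k)"
  "mtyping D u M a b \<Longrightarrow> occ k u * size M \<le> size (D k)"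
proof (induct arbitrary: k and k rule: typing_mtyping.inducts)
  case (tApp G t M T a b D u a' b')
  have "occ k u \<le> occ k u * size M" using tApp.hyps(5) by (rule le_mult_size)
  then have "occ k u \<le> size (D k)" using tApp.hyps(4)[of k] by (rule le_trans)
  then show ?case using tApp.hyps(2)[of k] by (simp add: tenv_app)
next
  case (tLam M G t T a b)
  then show ?case using tLam.hyps(2)[of "Suc k"] by (simp add: tenv_app)
next
  case (tSub M G t T a b D u a' b')
  have "occ k u \<le> occ k u * size M" using tSub.hyps(5) by (rule le_mult_size)
  then have "occ k u \<le> size (D k)" using tSub.hyps(4)[of k] by (rule le_trans)
  then show ?case using tSub.hyps(2)[of "Suc k"] by (simp add: tenv_app)
next
  case (tSub0 G t T a b D u s a' b')
  then show ?case using tSub0.hyps(2)[of "Suc k"] tSub0.hyps(4)[of k] by (simp add: tenv_app add_mono)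
next
  case (tApp0 G t T a b D u s a' b')
  then show ?case using tApp0.hyps(2)[of k] tApp0.hyps(4)[of k] by (simp add: tenv_app add_mono)
next
  case (sAdd D1 u s a1 b1 D2 M a2 b2)
  then show ?case using sAdd.hyps(2)[of k] sAdd.hyps(4)[of k] by (simp add: tenv_app add_mono)
qed (auto simp: tenv_app)

lemma typing_pos: "typing G t T a b \<Longrightarrow> 1 \<le> a" "mtyping D u M a b \<Longrightarrow> size M \<le> a"
  by (induct rule: typing_mtyping.inducts) auto

lemma typing_erase: "typing G t T a b \<Longrightarrow> occ k t = 0 \<Longrightarrow> typing (tdel k G) (subst t k u) T a b"
  "mtyping D t M a b \<Longrightarrow> occ k t = 0 \<Longrightarrow> mtyping (tdel k D) (subst t k u) M a b"
proof (induct arbitrary: k u and k u rule: typing_mtyping.inducts)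
  case (tVar i s G)
  then have "i \<noteq> k" by (simp split: if_splits)
  then have "tdel k (tplus (tsingle i s) G) = tplus (tsingle (if i < k then i else i - 1) s) (tdel k G)"
    by (simp add: tdel_tplus tdel_tsingle)
  then show ?case using typing_mtyping.tVar \<open>i \<noteq> k\<close> by simp
next
  case (tLam M G t T a b)
  have "typing (tdel (Suc k) (tins 0 M G)) (subst t (Suc k) (lift 0 u)) T a b"
    using tLam by simp
  then show ?case by (simp add: tdel_tins0 typing_mtyping.tLam)
next
  case (tApp G t M T a b D u' a' b')
  show ?case using typing_mtyping.tApp[OF tApp.hyps(2) tApp.hyps(4) tApp.hyps(5)] tApp.prems by (simp add: tdel_tplus)
next
  case (tApp0 G t T a b D u' s a' b')
  show ?case using typing_mtyping.tApp0[OF tApp0.hyps(2) tApp0.hyps(4)] tApp0.prems by (simp add: tdel_tplus)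
next
  case (tSub M G t T a b D u' a' b')
  have "typing (tdel (Suc k) (tins 0 M G)) (subst t (Suc k) (lift 0 u)) T a b" using tSub by simp
  then have "typing (tins 0 M (tdel k G)) (subst t (Suc k) (lift 0 u)) T a b" by (simp add: tdel_tins0)
  from typing_mtyping.tSub[OF this tSub.hyps(4) tSub.hyps(5)] tSub.prems show ?case by (simp add: tdel_tplus)
next
  case (tSub0 G t T a b D u' s a' b')
  have "typing (tdel (Suc k) (tins 0 {#} G)) (subst t (Suc k) (lift 0 u)) T a b" using tSub0 by simp
  then have "typing (tins 0 {#} (tdel k G)) (subst t (Suc k) (lift 0 u)) T a b" by (simp add: tdel_tins0)
  from typing_mtyping.tSub0[OF this tSub0.hyps(4)] tSub0.prems show ?case by (simp add: tdel_tplus)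
next
  case (sNil t)
  then show ?case by (simp add: typing_mtyping.sNil)
next
  case (sAdd D1 t s a1 b1 D2 M a2 b2)
  show ?case using typing_mtyping.sAdd[OF sAdd.hyps(2)[OF sAdd.prems] sAdd.hyps(4)[OF sAdd.prems]] by (simp add: tdel_tplus)
qed

text \<open>Renaming some occurrences of x to a fresh y splits the multiset of x between x and y;
  this is the typing counterpart of the duplication performed by rule c.\<close>
lemma upd_tins0: "(tins 0 M G)(Suc x := A, Suc y := B) = tins 0 M (G(x := A, y := B))"
  by (rule ext) (auto simp: tenv_app)
lemma upd_tplus: "x \<noteq> y \<Longrightarrow> (tplus G D)(x := A1 + B1, y := A2 + B2) = tplus (G(x := A1, y := A2)) (D(x := B1, y := B2))"
  by (rule ext) (auto simp: tenv_app)
lemma upd_keep: "G y = {#} \<Longrightarrow> G(x := G x, y := {#}) = G"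
  by (rule ext) auto
lemma upd_repl: "x \<noteq> y \<Longrightarrow> G y = {#} \<Longrightarrow> (tplus (tsingle x s) G)(x := G x, y := {#s#}) = tplus (tsingle y s) G"
  by (rule ext) (auto simp: tenv_app)
lemma upd_tenv0: "tenv0(x := {#}, y := {#}) = tenv0"
  by (rule ext) (auto simp: tenv_app)

lemma typing_ren: "typing G t T a b \<Longrightarrow> ren x y t s \<Longrightarrow> G y = {#} \<Longrightarrow> x \<noteq> y \<Longrightarrow>
    \<exists>M1 M2. G x = M1 + M2 \<and> typing (G(x := M1, y := M2)) s T a b"
  "mtyping D u M a b \<Longrightarrow> ren x y u v \<Longrightarrow> D y = {#} \<Longrightarrow> x \<noteq> y \<Longrightarrow>
    \<exists>N1 N2. D x = N1 + N2 \<and> mtyping (D(x := N1, y := N2)) v M a b"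
proof (induct arbitrary: x y s and x y v rule: typing_mtyping.inducts)
  case (tVar i s0 G)
  from tVar.prems(1) show ?case
  proof (cases rule: ren.cases)
    case ren_keep
    let ?G = "tplus (tsingle i s0) G"
    have "?G(x := ?G x, y := {#}) = ?G" using tVar.prems(2) by (rule upd_keep)
    then have "typing (?G(x := ?G x, y := {#})) s s0 1 0"
      using ren_keep typing_mtyping.tVar[of i s0 G] by simp
    then show ?thesis by (metis add.right_neutral)
  next
    case ren_repl
    have "G y = {#}" using tVar.prems(2) by (simp add: tenv_app)
    with tVar.prems(3) have "(tplus (tsingle x s0) G)(x := G x, y := {#s0#}) = tplus (tsingle y s0) G"
      by (rule upd_repl)
    then have "typing ((tplus (tsingle x s0) G)(x := G x, y := {#s0#})) s s0 1 0"
      using ren_repl typing_mtyping.tVar[of y s0 G] by simp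
    moreover have "tplus (tsingle x s0) G x = G x + {#s0#}" by (simp add: tenv_app)
    moreover have "i = x" using ren_repl by simp
    ultimately show ?thesis by blast
  qed
next
  case (tLam M G t T a b)
  from tLam.prems(1) obtain s' where s: "s = Lam s'" "ren (Suc x) (Suc y) t s'"
    by (auto elim: ren.cases)
  have "tins 0 M G (Suc y) = {#}" using tLam.prems(2) by (simp add: tenv_app)
  moreover have "Suc x \<noteq> Suc y" using tLam.prems(3) by simp
  ultimately have "\<exists>M1 M2. tins 0 M G (Suc x) = M1 + M2 \<and> typing ((tins 0 M G)(Suc x := M1, Suc y := M2)) s' T a b"
    using tLam.hyps(2)[OF s(2)] by blast
  then obtain M1 M2 where
    m: "tins 0 M G (Suc x) = M1 + M2" "typing ((tins 0 M G)(Suc x := M1, Suc y := M2)) s' T a b" by blast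
  have c: "typing (G(x := M1, y := M2)) (Lam s') (Arr M T) (Suc a) b"
    using m(2) unfolding upd_tins0 by (rule typing_mtyping.tLam)
  have "G x = M1 + M2" using m(1) by (simp add: tenv_app)
  then show ?case using c s by blast
next
  case (tApp G t M T a b D u a' b')
  from tApp.prems(1) obtain s1 s2 where s: "s = App s1 s2" "ren x y t s1" "ren x y u s2"
    by (auto elim: ren.cases)
  have y: "G y = {#}" "D y = {#}" using tApp.prems(2) by (auto simp: tenv_app)
  from tApp.hyps(2)[OF s(2) y(1) tApp.prems(3)] obtain A1 A2 where
    A: "G x = A1 + A2" "typing (G(x := A1, y := A2)) s1 (Arr M T) a b" by blast
  from tApp.hyps(4)[OF s(3) y(2) tApp.prems(3)] obtain B1 B2 where
    B: "D x = B1 + B2" "mtyping (D(x := B1, y := B2)) s2 M a' b'" by blast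
  have c: "typing ((tplus G D)(x := A1 + B1, y := A2 + B2)) (App s1 s2) T (Suc (a + a')) (b + b')"
    unfolding upd_tplus[OF tApp.prems(3)] by (rule typing_mtyping.tApp[OF A(2) B(2) tApp.hyps(5)])
  have "tplus G D x = (A1 + B1) + (A2 + B2)" using A(1) B(1) by (simp add: tenv_app ac_simps)
  then show ?case using c s by blast
next
  case (tApp0 G t T a b D u s0 a' b')
  from tApp0.prems(1) obtain s1 s2 where s: "s = App s1 s2" "ren x y t s1" "ren x y u s2"
    by (auto elim: ren.cases)
  have y: "G y = {#}" "D y = {#}" using tApp0.prems(2) by (auto simp: tenv_app)
  from tApp0.hyps(2)[OF s(2) y(1) tApp0.prems(3)] obtain A1 A2 where
    A: "G x = A1 + A2" "typing (G(x := A1, y := A2)) s1 (Arr {#} T) a b" by blast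
  from tApp0.hyps(4)[OF s(3) y(2) tApp0.prems(3)] obtain B1 B2 where
    B: "D x = B1 + B2" "typing (D(x := B1, y := B2)) s2 s0 a' b'" by blast
  have c: "typing ((tplus G D)(x := A1 + B1, y := A2 + B2)) (App s1 s2) T (Suc (a + a')) (b + b')"
    unfolding upd_tplus[OF tApp0.prems(3)] by (rule typing_mtyping.tApp0[OF A(2) B(2)])
  have "tplus G D x = (A1 + B1) + (A2 + B2)" using A(1) B(1) by (simp add: tenv_app ac_simps)
  then show ?case using c s by blast
next
  case (tSub M G t T a b D u a' b')
  from tSub.prems(1) obtain s1 s2 where s: "s = Sub s1 s2" "ren (Suc x) (Suc y) t s1" "ren x y u s2"
    by (auto elim: ren.cases)
  have y: "tins 0 M G (Suc y) = {#}" "D y = {#}" using tSub.prems(2) by (auto simp: tenv_app)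
  have "Suc x \<noteq> Suc y" using tSub.prems(3) by simp
  with tSub.hyps(2)[OF s(2) y(1)] obtain A1 A2 where
    A: "tins 0 M G (Suc x) = A1 + A2" "typing ((tins 0 M G)(Suc x := A1, Suc y := A2)) s1 T a b" by blast
  from tSub.hyps(4)[OF s(3) y(2) tSub.prems(3)] obtain B1 B2 where
    B: "D x = B1 + B2" "mtyping (D(x := B1, y := B2)) s2 M a' b'" by blast
  have A2: "typing (tins 0 M (G(x := A1, y := A2))) s1 T a b" using A(2) by (simp add: upd_tins0)
  have c: "typing ((tplus G D)(x := A1 + B1, y := A2 + B2)) (Sub s1 s2) T (a + a') (b + b' + size M * size M)"
    unfolding upd_tplus[OF tSub.prems(3)] by (rule typing_mtyping.tSub[OF A2 B(2) tSub.hyps(5)])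
  have "tplus G D x = (A1 + B1) + (A2 + B2)" using A(1) B(1) by (simp add: tenv_app ac_simps)
  then show ?case using c s by blast
next
  case (tSub0 G t T a b D u s0 a' b')
  from tSub0.prems(1) obtain s1 s2 where s: "s = Sub s1 s2" "ren (Suc x) (Suc y) t s1" "ren x y u s2"
    by (auto elim: ren.cases)
  have y: "tins 0 {#} G (Suc y) = {#}" "D y = {#}" using tSub0.prems(2) by (auto simp: tenv_app)
  have "Suc x \<noteq> Suc y" using tSub0.prems(3) by simp
  with tSub0.hyps(2)[OF s(2) y(1)] obtain A1 A2 where
    A: "tins 0 {#} G (Suc x) = A1 + A2" "typing ((tins 0 {#} G)(Suc x := A1, Suc y := A2)) s1 T a b" by blast
  from tSub0.hyps(4)[OF s(3) y(2) tSub0.prems(3)] obtain B1 B2 where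
    B: "D x = B1 + B2" "typing (D(x := B1, y := B2)) s2 s0 a' b'" by blast
  have A2: "typing (tins 0 {#} (G(x := A1, y := A2))) s1 T a b" using A(2) by (simp add: upd_tins0)
  have c: "typing ((tplus G D)(x := A1 + B1, y := A2 + B2)) (Sub s1 s2) T (a + a') (b + b')"
    unfolding upd_tplus[OF tSub0.prems(3)] by (rule typing_mtyping.tSub0[OF A2 B(2)])
  have "tplus G D x = (A1 + B1) + (A2 + B2)" using A(1) B(1) by (simp add: tenv_app ac_simps)
  then show ?case using c s by blast
next
  case (sNil u)
  have "mtyping (tenv0(x := {#}, y := {#})) v {#} 0 0" unfolding upd_tenv0 by (rule typing_mtyping.sNil)
  moreover have "tenv0 x = {#} + {#}" by (simp add: tenv0_def)
  ultimately show ?case by blast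
next
  case (sAdd D1 u s0 a1 b1 D2 M a2 b2)
  have y: "D1 y = {#}" "D2 y = {#}" using sAdd.prems(2) by (auto simp: tenv_app)
  from sAdd.hyps(2)[OF sAdd.prems(1) y(1) sAdd.prems(3)] obtain A1 A2 where
    A: "D1 x = A1 + A2" "typing (D1(x := A1, y := A2)) v s0 a1 b1" by blast
  from sAdd.hyps(4)[OF sAdd.prems(1) y(2) sAdd.prems(3)] obtain B1 B2 where
    B: "D2 x = B1 + B2" "mtyping (D2(x := B1, y := B2)) v M a2 b2" by blast
  have c: "mtyping ((tplus D1 D2)(x := A1 + B1, y := A2 + B2)) v (add_mset s0 M) (a1 + a2) (b1 + b2)"
    unfolding upd_tplus[OF sAdd.prems(3)] by (rule typing_mtyping.sAdd[OF A(2) B(2)])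
  have "tplus D1 D2 x = (A1 + B1) + (A2 + B2)" using A(1) B(1) by (simp add: tenv_app ac_simps)
  then show ?case using c by blast
qed

text \<open>The first measure
  of the result is at most the sum of both first measures minus one for every occurrence of
  k (those variable axioms disappear); the second measure does not exceed the sum.\<close>
lemma typing_subst: "typing G t T a b \<Longrightarrow> mtyping E v (G k) c d \<Longrightarrow>
    \<exists>a'' b''. typing (tplus (tdel k G) E) (subst t k v) T a'' b'' \<and> a'' + occ k t \<le> a + c \<and> b'' \<le> b + d"
  "mtyping G t N a b \<Longrightarrow> mtyping E v (G k) c d \<Longrightarrow>
    \<exists>a'' b''. mtyping (tplus (tdel k G) E) (subst t k v) N a'' b'' \<and> a'' + occ k t * size N \<le> a + c \<and> b'' \<le> b + d"
proof (induct arbitrary: k v E c d and k v E c d rule: typing_mtyping.inducts)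
  case (tVar i s G0)
  show ?case
  proof (cases "i = k")
    case True
    have "mtyping E v (add_mset s (G0 k)) c d" using tVar.prems True by (simp add: tplus_at tsingle_at)
    then obtain E1 E2 c1 d1 c2 d2 where E: "E = tplus E1 E2" "typing E1 v s c1 d1" "mtyping E2 v (G0 k) c2 d2"
      "c = c1 + c2" "d = d1 + d2" by (auto simp: mtyping_add)
    have "typing (tplus E1 (tplus (tdel k (tplus (tsingle i s) G0)) E2)) v s c1 d1" by (rule typing_weaken[OF E(2)])
    then have "typing (tplus (tdel k (tplus (tsingle i s) G0)) E) (subst (Var i) k v) s c1 d1"
      using True E(1) by (simp add: tplus_lcomm)
    then show ?thesis using E True by (rule_tac exI[of _ c1], rule_tac exI[of _ d1]) auto
  next
    case False
    let ?j = "if i < k then i else i - 1"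
    have "tdel k (tplus (tsingle i s) G0) = tplus (tsingle ?j s) (tdel k G0)" using False by (simp add: tdel_tplus tdel_tsingle)
    then have "typing (tplus (tdel k (tplus (tsingle i s) G0)) E) (Var ?j) s 1 0"
      using typing_mtyping.tVar[of ?j s "tplus (tdel k G0) E"] by (simp add: tplus_assoc)
    then show ?thesis using False by (rule_tac exI[of _ 1], rule_tac exI[of _ 0]) auto
  qed
next
  case (tLam M G t T a b)
  have "mtyping (tins 0 {#} E) (lift 0 v) (tins 0 M G (Suc k)) c d"
    using typing_lift(2)[OF tLam.prems, of 0] by simp
  from tLam.hyps(2)[OF this] obtain a'' b'' where
    h: "typing (tplus (tdel (Suc k) (tins 0 M G)) (tins 0 {#} E)) (subst t (Suc k) (lift 0 v)) T a'' b''"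
      "a'' + occ (Suc k) t \<le> a + c" "b'' \<le> b + d" by blast
  have "typing (tins 0 M (tplus (tdel k G) E)) (subst t (Suc k) (lift 0 v)) T a'' b''"
    using h(1) tins_tplus[of 0 M "{#}" "tdel k G" E] by (simp add: tdel_tins0)
  then have "typing (tplus (tdel k G) E) (subst (Lam t) k v) (Arr M T) (Suc a'') b''"
    by (simp add: typing_mtyping.tLam)
  then show ?case using h by (rule_tac exI[of _ "Suc a''"], rule_tac exI[of _ b'']) auto
next
  case (tApp G t M T a b D u a' b')
  have "mtyping E v (G k + D k) c d" using tApp.prems by (simp add: tplus_at)
  from mtyping_split[OF this] obtain E1 E2 c1 d1 c2 d2 where E: "E = tplus E1 E2" "mtyping E1 v (G k) c1 d1"
    "mtyping E2 v (D k) c2 d2" "c = c1 + c2" "d = d1 + d2" by blast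
  from tApp.hyps(2)[OF E(2)] obtain a1 b1 where
    h1: "typing (tplus (tdel k G) E1) (subst t k v) (Arr M T) a1 b1" "a1 + occ k t \<le> a + c1" "b1 \<le> b + d1" by blast
  from tApp.hyps(4)[OF E(3)] obtain a2 b2 where
    h2: "mtyping (tplus (tdel k D) E2) (subst u k v) M a2 b2" "a2 + occ k u * size M \<le> a' + c2" "b2 \<le> b' + d2" by blast
  have "typing (tplus (tplus (tdel k G) E1) (tplus (tdel k D) E2)) (App (subst t k v) (subst u k v)) T (Suc (a1 + a2)) (b1 + b2)"
    using h1(1) h2(1) tApp.hyps(5) by (rule typing_mtyping.tApp)
  then have r: "typing (tplus (tdel k (tplus G D)) E) (subst (App t u) k v) T (Suc (a1 + a2)) (b1 + b2)"
    using E(1) by (simp add: tdel_tplus tplus_assoc tplus_comm tplus_lcomm)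
  have m: "occ k u \<le> occ k u * size M" using tApp.hyps(5) by (rule le_mult_size)
  have "a2 + occ k u \<le> a' + c2" using m h2(2) by linarith
  then show ?case using r h1 h2(1,3) E by (rule_tac exI[of _ "Suc (a1 + a2)"], rule_tac exI[of _ "b1 + b2"]) auto
next
  case (tApp0 G t T a b D u s a' b')
  have "mtyping E v (G k + D k) c d" using tApp0.prems by (simp add: tplus_at)
  from mtyping_split[OF this] obtain E1 E2 c1 d1 c2 d2 where E: "E = tplus E1 E2" "mtyping E1 v (G k) c1 d1"
    "mtyping E2 v (D k) c2 d2" "c = c1 + c2" "d = d1 + d2" by blast
  from tApp0.hyps(2)[OF E(2)] obtain a1 b1 where
    h1: "typing (tplus (tdel k G) E1) (subst t k v) (Arr {#} T) a1 b1" "a1 + occ k t \<le> a + c1" "b1 \<le> b + d1" by blast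
  from tApp0.hyps(4)[OF E(3)] obtain a2 b2 where
    h2: "typing (tplus (tdel k D) E2) (subst u k v) s a2 b2" "a2 + occ k u \<le> a' + c2" "b2 \<le> b' + d2" by blast
  have "typing (tplus (tplus (tdel k G) E1) (tplus (tdel k D) E2)) (App (subst t k v) (subst u k v)) T (Suc (a1 + a2)) (b1 + b2)"
    using h1(1) h2(1) by (rule typing_mtyping.tApp0)
  then have r: "typing (tplus (tdel k (tplus G D)) E) (subst (App t u) k v) T (Suc (a1 + a2)) (b1 + b2)"
    using E(1) by (simp add: tdel_tplus tplus_assoc tplus_comm tplus_lcomm)
  then show ?case using r h1 h2 E by (rule_tac exI[of _ "Suc (a1 + a2)"], rule_tac exI[of _ "b1 + b2"]) auto
next
  case (tSub M G t T a b D u a' b')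
  have "mtyping E v (G k + D k) c d" using tSub.prems by (simp add: tplus_at)
  from mtyping_split[OF this] obtain E1 E2 c1 d1 c2 d2 where E: "E = tplus E1 E2" "mtyping E1 v (G k) c1 d1"
    "mtyping E2 v (D k) c2 d2" "c = c1 + c2" "d = d1 + d2" by blast
  have "mtyping (tins 0 {#} E1) (lift 0 v) (tins 0 M G (Suc k)) c1 d1"
    using typing_lift(2)[OF E(2), of 0] by simp
  from tSub.hyps(2)[OF this] obtain a1 b1 where
    h1: "typing (tplus (tdel (Suc k) (tins 0 M G)) (tins 0 {#} E1)) (subst t (Suc k) (lift 0 v)) T a1 b1"
      "a1 + occ (Suc k) t \<le> a + c1" "b1 \<le> b + d1" by blast
  have h1': "typing (tins 0 M (tplus (tdel k G) E1)) (subst t (Suc k) (lift 0 v)) T a1 b1"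
    using h1(1) tins_tplus[of 0 M "{#}" "tdel k G" E1] by (simp add: tdel_tins0)
  from tSub.hyps(4)[OF E(3)] obtain a2 b2 where
    h2: "mtyping (tplus (tdel k D) E2) (subst u k v) M a2 b2" "a2 + occ k u * size M \<le> a' + c2" "b2 \<le> b' + d2" by blast
  have "typing (tplus (tplus (tdel k G) E1) (tplus (tdel k D) E2)) (Sub (subst t (Suc k) (lift 0 v)) (subst u k v)) T
     (a1 + a2) (b1 + b2 + size M * size M)"
    using h1' h2(1) tSub.hyps(5) by (rule typing_mtyping.tSub)
  then have r: "typing (tplus (tdel k (tplus G D)) E) (subst (Sub t u) k v) T (a1 + a2) (b1 + b2 + size M * size M)"
    using E(1) by (simp add: tdel_tplus tplus_assoc tplus_comm tplus_lcomm)
  have m: "occ k u \<le> occ k u * size M" using tSub.hyps(5) by (rule le_mult_size)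
  have "a2 + occ k u \<le> a' + c2" using m h2(2) by linarith
  then show ?case using r h1 h2(1,3) E by (rule_tac exI[of _ "a1 + a2"], rule_tac exI[of _ "b1 + b2 + size M * size M"]) auto
next
  case (tSub0 G t T a b D u s a' b')
  have "mtyping E v (G k + D k) c d" using tSub0.prems by (simp add: tplus_at)
  from mtyping_split[OF this] obtain E1 E2 c1 d1 c2 d2 where E: "E = tplus E1 E2" "mtyping E1 v (G k) c1 d1"
    "mtyping E2 v (D k) c2 d2" "c = c1 + c2" "d = d1 + d2" by blast
  have "mtyping (tins 0 {#} E1) (lift 0 v) (tins 0 {#} G (Suc k)) c1 d1"
    using typing_lift(2)[OF E(2), of 0] by simp
  from tSub0.hyps(2)[OF this] obtain a1 b1 where
    h1: "typing (tplus (tdel (Suc k) (tins 0 {#} G)) (tins 0 {#} E1)) (subst t (Suc k) (lift 0 v)) T a1 b1"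
      "a1 + occ (Suc k) t \<le> a + c1" "b1 \<le> b + d1" by blast
  have h1': "typing (tins 0 {#} (tplus (tdel k G) E1)) (subst t (Suc k) (lift 0 v)) T a1 b1"
    using h1(1) tins_tplus[of 0 "{#}" "{#}" "tdel k G" E1] by (simp add: tdel_tins0)
  from tSub0.hyps(4)[OF E(3)] obtain a2 b2 where
    h2: "typing (tplus (tdel k D) E2) (subst u k v) s a2 b2" "a2 + occ k u \<le> a' + c2" "b2 \<le> b' + d2" by blast
  have "typing (tplus (tplus (tdel k G) E1) (tplus (tdel k D) E2)) (Sub (subst t (Suc k) (lift 0 v)) (subst u k v)) T
     (a1 + a2) (b1 + b2)"
    using h1' h2(1) by (rule typing_mtyping.tSub0)
  then have r: "typing (tplus (tdel k (tplus G D)) E) (subst (Sub t u) k v) T (a1 + a2) (b1 + b2)"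
    using E(1) by (simp add: tdel_tplus tplus_assoc tplus_comm tplus_lcomm)
  then show ?case using r h1 h2 E by (rule_tac exI[of _ "a1 + a2"], rule_tac exI[of _ "b1 + b2"]) auto
next
  case (sNil t)
  then have "E = tenv0" "c = 0" "d = 0" by (auto simp: mtyping_empty tenv0_at)
  then show ?case using typing_mtyping.sNil[of "subst t k v"] by auto
next
  case (sAdd D1 t s a1 b1 D2 M a2 b2)
  have "mtyping E v (D1 k + D2 k) c d" using sAdd.prems by (simp add: tplus_at)
  from mtyping_split[OF this] obtain E1 E2 c1 d1 c2 d2 where E: "E = tplus E1 E2" "mtyping E1 v (D1 k) c1 d1"
    "mtyping E2 v (D2 k) c2 d2" "c = c1 + c2" "d = d1 + d2" by blast
  from sAdd.hyps(2)[OF E(2)] obtain x1 y1 where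
    h1: "typing (tplus (tdel k D1) E1) (subst t k v) s x1 y1" "x1 + occ k t \<le> a1 + c1" "y1 \<le> b1 + d1" by blast
  from sAdd.hyps(4)[OF E(3)] obtain x2 y2 where
    h2: "mtyping (tplus (tdel k D2) E2) (subst t k v) M x2 y2" "x2 + occ k t * size M \<le> a2 + c2" "y2 \<le> b2 + d2" by blast
  have "mtyping (tplus (tplus (tdel k D1) E1) (tplus (tdel k D2) E2)) (subst t k v) (add_mset s M) (x1 + x2) (y1 + y2)"
    using h1(1) h2(1) by (rule typing_mtyping.sAdd)
  then have r: "mtyping (tplus (tdel k (tplus D1 D2)) E) (subst t k v) (add_mset s M) (x1 + x2) (y1 + y2)"
    using E(1) by (simp add: tdel_tplus tplus_assoc tplus_comm tplus_lcomm)
  then show ?case using r h1 h2 E by (rule_tac exI[of _ "x1 + x2"], rule_tac exI[of _ "y1 + y2"]) (auto simp: algebra_simps)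
qed

section \<open>Typing of arguments and of subterms in context\<close>

lemma tSub_arg: "typing (tins 0 M G) t T a b \<Longrightarrow> atyping D u M a' b' \<Longrightarrow>
   typing (tplus G D) (Sub t u) T (a + a') (b + b' + size M * size M)"
  by (subst typing_Sub) blast

lemma tApp_arg: "typing G t (Arr M T) a b \<Longrightarrow> atyping D u M a' b' \<Longrightarrow>
   typing (tplus G D) (App t u) T (Suc (a + a')) (b + b')"
  by (subst typing_App) blast

lemma atyping_lift: "atyping D u M a b \<Longrightarrow> atyping (tins k {#} D) (lift k u) M a b"
  by (auto simp: atyping_def split: if_splits intro: typing_lift)

lemma atyping_unlift: "atyping D (lift k u) M a b \<Longrightarrow> atyping (tdel k D) u M a b"
  by (auto simp: atyping_def split: if_splits intro: typing_unlift(1)[OF _ refl] typing_unlift(2)[OF _ refl])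

lemma atyping_pos: "atyping D u M a b \<Longrightarrow> 1 \<le> a"
proof -
  assume h: "atyping D u M a b"
  show ?thesis
  proof (cases "M = {#}")
    case True then show ?thesis using h typing_pos(1) by (auto simp: atyping_def)
  next
    case False
    then have "1 \<le> size M" by (cases M) auto
    then show ?thesis using h False typing_pos(2)[of D u M a b] by (auto simp: atyping_def)
  qed
qed

lemma atyping_shrink: "atyping D u (A + B) a b \<Longrightarrow> \<exists>D' a' b'. atyping D' u A a' b' \<and> (\<forall>i. D' i \<subseteq># D i) \<and> a' \<le> a \<and> b' \<le> b"
proof -
  assume h: "atyping D u (A + B) a b"
  show ?thesis
  proof (cases "A + B = {#}")
    case True
    then show ?thesis using h by (rule_tac exI[of _ D], rule_tac exI[of _ a], rule_tac exI[of _ b]) (auto simp: atyping_def)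
  next
    case False
    then have s: "mtyping D u (A + B) a b" using h by (simp add: atyping_def)
    from mtyping_split[OF s] obtain D1 D2 a1 b1 a2 b2 where d: "D = tplus D1 D2" "mtyping D1 u A a1 b1"
      "mtyping D2 u B a2 b2" "a = a1 + a2" "b = b1 + b2" by blast
    show ?thesis
    proof (cases "A = {#}")
      case False
      then show ?thesis using d by (rule_tac exI[of _ D1], rule_tac exI[of _ a1], rule_tac exI[of _ b1])
        (auto simp: atyping_def tplus_at)
    next
      case True
      then have "B \<noteq> {#}" using \<open>A + B \<noteq> {#}\<close> by simp
      then obtain x where "x \<in># B" by (meson multiset_nonemptyE)
      from mtyping_pick[OF d(3) this] obtain E1 E2 c1 d1 c2 d2 where e: "D2 = tplus E1 E2" "typing E1 u x c1 d1"
        "a2 = c1 + c2" "b2 = d1 + d2" by blast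
      have "\<forall>i. E1 i \<subseteq># D i" using d(1) e(1) by (simp add: tplus_at)
      then show ?thesis using True e d by (rule_tac exI[of _ E1], rule_tac exI[of _ c1], rule_tac exI[of _ d1])
        (auto simp: atyping_def)
    qed
  qed
qed

lemma mtyping_step:
  assumes H: "\<And>G T a b. typing G t T a b \<Longrightarrow> \<exists>a' b'. typing G t' T a' b' \<and> R a' b' a b"
    and Ra: "\<And>x1 y1 x2 y2 u1 v1 u2 v2. R x1 y1 u1 v1 \<Longrightarrow> R x2 y2 u2 v2 \<Longrightarrow> R (x1 + x2) (y1 + y2) (u1 + u2) (v1 + v2)"
  shows "mtyping D t M a b \<Longrightarrow> M \<noteq> {#} \<Longrightarrow> \<exists>a' b'. mtyping D t' M a' b' \<and> R a' b' a b"
proof (induct M arbitrary: D a b)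
  case empty then show ?case by simp
next
  case (add s M)
  from add.prems(1) obtain D1 D2 a1 b1 a2 b2 where d: "D = tplus D1 D2" "typing D1 t s a1 b1" "mtyping D2 t M a2 b2"
    "a = a1 + a2" "b = b1 + b2" by (auto simp: mtyping_add)
  from H[OF d(2)] obtain a1' b1' where h1: "typing D1 t' s a1' b1'" "R a1' b1' a1 b1" by blast
  show ?case
  proof (cases "M = {#}")
    case True
    then have "D2 = tenv0" "a2 = 0" "b2 = 0" using d(3) by (auto simp: mtyping_empty)
    then have "mtyping D t' (add_mset s M) a1' b1'" using d h1 True typing_mtyping.sAdd[OF h1(1) typing_mtyping.sNil] by simp
    then show ?thesis using h1 d \<open>a2 = 0\<close> \<open>b2 = 0\<close> by auto
  next
    case False
    from add.hyps[OF d(3) False] obtain a2' b2' where h2: "mtyping D2 t' M a2' b2'" "R a2' b2' a2 b2" by blast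
    have "mtyping D t' (add_mset s M) (a1' + a2') (b1' + b2')" using d(1) typing_mtyping.sAdd[OF h1(1) h2(1)] by simp
    then show ?thesis using Ra[OF h1(2) h2(2)] d by blast
  qed
qed

lemma atyping_step:
  assumes H: "\<And>G T a b. typing G t T a b \<Longrightarrow> \<exists>a' b'. typing G t' T a' b' \<and> R a' b' a b"
    and Ra: "\<And>x1 y1 x2 y2 u1 v1 u2 v2. R x1 y1 u1 v1 \<Longrightarrow> R x2 y2 u2 v2 \<Longrightarrow> R (x1 + x2) (y1 + y2) (u1 + u2) (v1 + v2)"
  shows "atyping D t M a b \<Longrightarrow> \<exists>a' b'. atyping D t' M a' b' \<and> R a' b' a b"
proof -
  assume h: "atyping D t M a b"
  show ?thesis
  proof (cases "M = {#}")
    case True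
    then obtain s where "typing D t s a b" using h by (auto simp: atyping_def)
    from H[OF this] show ?thesis using True by (auto simp: atyping_def)
  next
    case False
    then have "mtyping D t M a b" using h by (simp add: atyping_def)
    from mtyping_step[of t t' R, OF H Ra this False] show ?thesis using False by (simp add: atyping_def)
  qed
qed

text \<open>This is
  used both for lambda-j steps (R = strict lexicographic decrease) and for the o-equations
  (R = componentwise non-increase).\<close>
lemma ctx_typing_step:
  assumes root: "\<And>t t' G T a b. r t t' \<Longrightarrow> typing G t T a b \<Longrightarrow>
      \<exists>a' b'. typing G t' T a' b' \<and> R a' b' a b"
    and shift: "\<And>a' b' a b c d. R a' b' a b \<Longrightarrow> R (c + a') (d + b') (c + a) (d + b)"
    and sum: "\<And>x1 y1 x2 y2 u1 v1 u2 v2. R x1 y1 u1 v1 \<Longrightarrow> R x2 y2 u2 v2 \<Longrightarrow>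
      R (x1 + x2) (y1 + y2) (u1 + u2) (v1 + v2)"
  shows "ctx r t t' \<Longrightarrow> typing G t T a b \<Longrightarrow> \<exists>a' b'. typing G t' T a' b' \<and> R a' b' a b"
proof (induct arbitrary: G T a b rule: ctx.induct)
  case (ctx_root t u)
  then show ?case by (rule root)
next
  case (ctx_Lam t u)
  from ctx_Lam.prems obtain M T' a1 where h: "T = Arr M T'" "a = Suc a1" "typing (tins 0 M G) t T' a1 b"
    by (auto simp: typing_Lam)
  from ctx_Lam.hyps(2)[OF h(3)] obtain a' b' where "typing (tins 0 M G) u T' a' b'" "R a' b' a1 b"
    by blast
  with shift[of a' b' a1 b 1 0] h show ?case by (auto intro: typing_mtyping.tLam)
next
  case (ctx_AppL t u s)
  from ctx_AppL.prems obtain M G1 D a1 b1 a2 b2 where h: "G = tplus G1 D" "typing G1 t (Arr M T) a1 b1"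
    "atyping D s M a2 b2" "a = Suc (a1 + a2)" "b = b1 + b2" by (auto simp: typing_App)
  from ctx_AppL.hyps(2)[OF h(2)] obtain a' b' where "typing G1 u (Arr M T) a' b'" "R a' b' a1 b1"
    by blast
  with shift[of a' b' a1 b1 "Suc a2" b2] h tApp_arg[of G1 u M T] show ?case by (fastforce simp: ac_simps)
next
  case (ctx_AppR t u s)
  from ctx_AppR.prems obtain M G1 D a1 b1 a2 b2 where h: "G = tplus G1 D" "typing G1 s (Arr M T) a1 b1"
    "atyping D t M a2 b2" "a = Suc (a1 + a2)" "b = b1 + b2" by (auto simp: typing_App)
  from atyping_step[of t u R, OF ctx_AppR.hyps(2) sum h(3)] obtain a' b' where
    "atyping D u M a' b'" "R a' b' a2 b2" by blast
  with shift[of a' b' a2 b2 "Suc a1" b1] h tApp_arg[of G1 s M T] show ?case by fastforce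
next
  case (ctx_SubL t u s)
  from ctx_SubL.prems obtain M G1 D a1 b1 a2 b2 where h: "G = tplus G1 D" "typing (tins 0 M G1) t T a1 b1"
    "atyping D s M a2 b2" "a = a1 + a2" "b = b1 + b2 + size M * size M" by (auto simp: typing_Sub)
  from ctx_SubL.hyps(2)[OF h(2)] obtain a' b' where "typing (tins 0 M G1) u T a' b'" "R a' b' a1 b1"
    by blast
  with shift[of a' b' a1 b1 a2 "b2 + size M * size M"] h tSub_arg[of M G1 u T] show ?case
    by (fastforce simp: ac_simps)
next
  case (ctx_SubR t u s)
  from ctx_SubR.prems obtain M G1 D a1 b1 a2 b2 where h: "G = tplus G1 D" "typing (tins 0 M G1) s T a1 b1"
    "atyping D t M a2 b2" "a = a1 + a2" "b = b1 + b2 + size M * size M" by (auto simp: typing_Sub)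
  from atyping_step[of t u R, OF ctx_SubR.hyps(2) sum h(3)] obtain a' b' where
    "atyping D u M a' b'" "R a' b' a2 b2" by blast
  with shift[of a' b' a2 b2 a1 "b1 + size M * size M"] h tSub_arg[of M G1 s T] show ?case
    by (fastforce simp: ac_simps)
qed

section \<open>Subject reduction: lambda-j steps decrease the measure\<close>

definition lex_less :: "nat \<Rightarrow> nat \<Rightarrow> nat \<Rightarrow> nat \<Rightarrow> bool" where
  "lex_less a' b' a b \<longleftrightarrow> a' < a \<or> (a' = a \<and> b' < b)"

text \<open>Typing the result of a dB-step: the abstraction node disappears and the argument is
  typed by a jump instead of an application.\<close>
lemma typing_dB: "typing G (subs (Lam t) L) (Arr M T) a b \<Longrightarrow> atyping D u M a2 b2 \<Longrightarrow>
   \<exists>a1. a = Suc a1 \<and> typing (tplus G D) (subs (Sub t ((lift 0 ^^ length L) u)) L) T (a1 + a2) (b + b2 + size M * size M)"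
proof (induct L arbitrary: G a b D u rule: rev_induct)
  case Nil
  from Nil.prems(1) obtain a1 where a: "a = Suc a1" "typing (tins 0 M G) t T a1 b" by (auto simp: typing_Lam)
  have "typing (tplus G D) (Sub t u) T (a1 + a2) (b + b2 + size M * size M)"
    using a(2) Nil.prems(2) by (subst typing_Sub) blast
  then show ?case using a by simp
next
  case (snoc v L)
  from snoc.prems(1) obtain N G1 Dv a1 b1 a3 b3 where h: "G = tplus G1 Dv"
    "typing (tins 0 N G1) (subs (Lam t) L) (Arr M T) a1 b1" "atyping Dv v N a3 b3" "a = a1 + a3" "b = b1 + b3 + size N * size N"
    by (auto simp: subs_snoc typing_Sub)
  from snoc.hyps[OF h(2) atyping_lift[OF snoc.prems(2), of 0]] obtain a1' where
    i: "a1 = Suc a1'" "typing (tplus (tins 0 N G1) (tins 0 {#} D)) (subs (Sub t ((lift 0 ^^ length L) (lift 0 u))) L) T (a1' + a2)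
        (b1 + b2 + size M * size M)" by blast
  have e: "(lift 0 ^^ length L) (lift 0 u) = (lift 0 ^^ length (L @ [v])) u"
    by (simp only: length_append_singleton funpow_Suc_right comp_def)
  have "typing (tins 0 N (tplus G1 D)) (subs (Sub t ((lift 0 ^^ length (L @ [v])) u)) L) T (a1' + a2)
        (b1 + b2 + size M * size M)" using i(2) tins_tplus[of 0 N "{#}" G1 D] e by simp
  then have "typing (tplus (tplus G1 D) Dv) (Sub (subs (Sub t ((lift 0 ^^ length (L @ [v])) u)) L) v) T (a1' + a2 + a3)
        (b1 + b2 + size M * size M + b3 + size N * size N)"
    using h(3) by (subst typing_Sub) blast
  then show ?case using h i by (simp add: subs_snoc tplus_assoc tplus_comm tplus_lcomm algebra_simps)
qed

lemma typing_dB_step: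
  assumes "typing G (App (subs (Lam t) L) u) T a b"
  shows "\<exists>a' b'. typing G (subs (Sub t ((lift 0 ^^ length L) u)) L) T a' b' \<and> lex_less a' b' a b"
proof -
  from assms obtain M G1 D a1 b1 a2 b2 where h: "G = tplus G1 D"
    "typing G1 (subs (Lam t) L) (Arr M T) a1 b1" "atyping D u M a2 b2" "a = Suc (a1 + a2)" "b = b1 + b2"
    by (auto simp: typing_App)
  from typing_dB[OF h(2,3)] obtain a1' where "a1 = Suc a1'"
    and "typing G (subs (Sub t ((lift 0 ^^ length L) u)) L) T (a1' + a2) (b1 + b2 + size M * size M)"
    using h(1) by blast
  moreover have "lex_less (a1' + a2) (b1 + b2 + size M * size M) a b"
    using h(4) \<open>a1 = Suc a1'\<close> by (simp add: lex_less_def)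
  ultimately show ?thesis by blast
qed

text \<open>Erasing a jump removes the (nonempty) derivation of its argument.\<close>
lemma typing_w_step:
  assumes "occ 0 t = 0" and "typing G (Sub t u) T a b"
  shows "\<exists>a' b'. typing G (subst t 0 u) T a' b' \<and> lex_less a' b' a b"
proof -
  from assms(2) obtain M G1 D a1 b1 a2 b2 where h: "G = tplus G1 D" "typing (tins 0 M G1) t T a1 b1"
    "atyping D u M a2 b2" "a = a1 + a2" "b = b1 + b2 + size M * size M" by (auto simp: typing_Sub)
  have "typing G (subst t 0 u) T a1 b1"
    using typing_erase(1)[OF h(2) assms(1), of u] h(1) typing_weaken by simp
  moreover have "lex_less a1 b1 a b" using atyping_pos[OF h(3)] h(4) by (simp add: lex_less_def)
  ultimately show ?thesis by blast
qed

text \<open>Executing a linear jump: the typing of the variable occurrence disappears.\<close>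
lemma typing_d_step:
  assumes "occ 0 t = 1" and "typing G (Sub t u) T a b"
  shows "\<exists>a' b'. typing G (subst t 0 u) T a' b' \<and> lex_less a' b' a b"
proof -
  from assms(2) obtain M G1 D a1 b1 a2 b2 where h: "G = tplus G1 D" "typing (tins 0 M G1) t T a1 b1"
    "atyping D u M a2 b2" "a = a1 + a2" "b = b1 + b2 + size M * size M" by (auto simp: typing_Sub)
  have "M \<noteq> {#}" using typing_occ(1)[OF h(2), of 0] assms(1) by auto
  then have "mtyping D u (tins 0 M G1 0) a2 b2" using h(3) by (simp add: atyping_def)
  from typing_subst(1)[OF h(2) this] obtain a' b' where
    "typing G (subst t 0 u) T a' b'" "a' + occ 0 t \<le> a1 + a2" "b' \<le> b1 + b2"
    using h(1) by auto
  moreover from this(2) have "lex_less a' b' a b" using h(4) assms(1) by (simp add: lex_less_def)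
  ultimately show ?thesis by blast
qed

lemma typing_duplicate:
  assumes "typing (tins 0 M G) t T a b" and "ren 0 1 (lift 1 t) s"
  shows "\<exists>M1 M2. M = M1 + M2 \<and> typing (tins 0 M1 (tins 0 M2 G)) s T a b"
proof -
  have "typing (tins 1 {#} (tins 0 M G)) (lift 1 t) T a b" by (rule typing_lift(1)[OF assms(1)])
  then have "typing (tins 0 M (tins 0 {#} G)) (lift 1 t) T a b" using tins_tins0[of 0 "{#}" M G] by simp
  from typing_ren(1)[OF this assms(2)] obtain M1 M2 where
    "tins 0 M (tins 0 {#} G) 0 = M1 + M2" "typing ((tins 0 M (tins 0 {#} G))(0 := M1, 1 := M2)) s T a b"
    by (auto simp: tenv_app)
  moreover have "(tins 0 M (tins 0 {#} G))(0 := M1, 1 := M2) = tins 0 M1 (tins 0 M2 G)"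
    by (rule ext) (auto simp: tenv_app)
  ultimately show ?thesis by auto
qed

lemma square_split_less:
  "M1 \<noteq> {#} \<Longrightarrow> M2 \<noteq> {#} \<Longrightarrow> size M1 * size M1 + size M2 * size M2 < size (M1 + M2) * size (M1 + M2)"
  by (cases M1; cases M2) (auto simp: algebra_simps)

text \<open>Rule c keeps the first measure and replaces |M|^2 by |M1|^2 + |M2|^2 with M1, M2
  nonempty: the second measure decreases.\<close>
lemma typing_c_step:
  assumes "ren 0 1 (lift 1 t) s" "occ 0 s \<ge> 1" "occ 1 s \<ge> 1" and "typing G (Sub t u) T a b"
  shows "\<exists>b'. typing G (Sub (Sub s (lift 0 u)) u) T a b' \<and> b' < b"
proof -
  from assms(4) obtain M G1 D a1 b1 a2 b2 where h: "G = tplus G1 D" "typing (tins 0 M G1) t T a1 b1"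
    "atyping D u M a2 b2" "a = a1 + a2" "b = b1 + b2 + size M * size M" by (auto simp: typing_Sub)
  from typing_duplicate[OF h(2) assms(1)] obtain M1 M2 where
    m: "M = M1 + M2" and s: "typing (tins 0 M1 (tins 0 M2 G1)) s T a1 b1" by blast
  have n1: "M1 \<noteq> {#}" using typing_occ(1)[OF s, of 0] assms(2) by auto
  have n2: "M2 \<noteq> {#}" using typing_occ(1)[OF s, of 1] assms(3) by auto
  then have "mtyping D u (M1 + M2) a2 b2" using h(3) m by (simp add: atyping_def)
  from mtyping_split[OF this] obtain D1 D2 c1 d1 c2 d2 where e: "D = tplus D1 D2"
    "mtyping D1 u M1 c1 d1" "mtyping D2 u M2 c2 d2" "a2 = c1 + c2" "b2 = d1 + d2" by blast
  have "typing (tplus (tins 0 M2 G1) (tins 0 {#} D1)) (Sub s (lift 0 u)) T (a1 + c1) (b1 + d1 + size M1 * size M1)"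
    using s typing_lift(2)[OF e(2), of 0] n1 by (rule typing_mtyping.tSub)
  then have "typing (tins 0 M2 (tplus G1 D1)) (Sub s (lift 0 u)) T (a1 + c1) (b1 + d1 + size M1 * size M1)"
    using tins_tplus[of 0 M2 "{#}" G1 D1] by simp
  then have "typing (tplus (tplus G1 D1) D2) (Sub (Sub s (lift 0 u)) u) T (a1 + c1 + c2)
     (b1 + d1 + size M1 * size M1 + d2 + size M2 * size M2)"
    using e(3) n2 by (rule typing_mtyping.tSub)
  moreover have "size M1 * size M1 + size M2 * size M2 < size M * size M"
    using square_split_less[OF n1 n2] m by simp
  ultimately show ?thesis using h e by (auto simp: tplus_assoc add.assoc)
qed

lemma root_typing_decrease:
  "lj_root t t' \<Longrightarrow> typing G t T a b \<Longrightarrow> \<exists>a' b'. typing G t' T a' b' \<and> lex_less a' b' a b"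
proof (induct rule: lj_root.induct)
  case (dB t L u)
  then show ?case by (rule typing_dB_step)
next
  case (w t u)
  then show ?case by (rule typing_w_step)
next
  case (d t u)
  then show ?case by (rule typing_d_step)
next
  case (c t s u)
  then show ?case using typing_c_step[OF c.hyps(2-4) c.prems] by (auto simp: lex_less_def)
qed

theorem lj_typing_decrease:
  "lj t t' \<Longrightarrow> typing G t T a b \<Longrightarrow> \<exists>a' b'. typing G t' T a' b' \<and> lex_less a' b' a b"
  unfolding lj_def
  by (rule ctx_typing_step[of lj_root lex_less, OF root_typing_decrease])
     (auto simp: lex_less_def)

section \<open>The o-equations do not increase the measure\<close>

lemma tswap0_tins: "tswap 0 (tins 0 A (tins 0 B G)) = tins 0 B (tins 0 A G)"
  by (rule ext) (auto simp: tenv_app)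

lemma sq_mono: "size A \<le> size B \<Longrightarrow> size A * size A \<le> size B * size B"
  by (simp add: mult_le_mono)

text \<open>In the CS and application equations the argument of the outer
  jump may have to be typed with fewer types (via atyping_shrink), since part of the
  multiset of the jumped variable may now belong to a different subterm.\<close>

lemma typing_CS_le: "typing G (Sub (Sub t0 (lift 0 s)) v) T a b \<Longrightarrow>
  \<exists>a' b'. typing G (Sub (Sub (sw 0 t0) (lift 0 v)) s) T a' b' \<and> a' \<le> a \<and> b' \<le> b"
proof -
  assume a0: "typing G (Sub (Sub t0 (lift 0 s)) v) T a b"
  obtain My G1 Dv a1 b1 a2 b2 where h: "G = tplus G1 Dv" "typing (tins 0 My G1) (Sub t0 (lift 0 s)) T a1 b1"
    "atyping Dv v My a2 b2" "a = a1 + a2" "b = b1 + b2 + size My * size My" using typing_Sub[THEN iffD1, OF a0] by blast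
  obtain Mx G2 Ds' a3 b3 a4 b4 where i: "tins 0 My G1 = tplus G2 Ds'" "typing (tins 0 Mx G2) t0 T a3 b3"
    "atyping Ds' (lift 0 s) Mx a4 b4" "a1 = a3 + a4" "b1 = b3 + b4 + size Mx * size Mx" using typing_Sub[THEN iffD1, OF h(2)] by blast
  have ts: "atyping (tdel 0 Ds') s Mx a4 b4" by (rule atyping_unlift[OF i(3)])
  have G1: "G1 = tplus (tdel 0 G2) (tdel 0 Ds')" using arg_cong[OF i(1), of "tdel 0"] by (simp add: tdel_tplus)
  have My: "My = G2 0 + Ds' 0" using fun_cong[OF i(1), of 0] by (simp add: tplus_at)
  have "typing (tins 0 Mx (tins 0 (G2 0) (tdel 0 G2))) t0 T a3 b3" using i(2) by (simp add: tins_tdel)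
  from typing_sw(1)[OF this, of 0] have t1: "typing (tins 0 (G2 0) (tins 0 Mx (tdel 0 G2))) (sw 0 t0) T a3 b3"
    by (simp add: tswap0_tins)
  from atyping_shrink[OF h(3)[unfolded My]] obtain Dv' a2' b2' where
    sh: "atyping Dv' v (G2 0) a2' b2'" "\<forall>i. Dv' i \<subseteq># Dv i" "a2' \<le> a2" "b2' \<le> b2" by blast
  have "typing (tplus (tins 0 Mx (tdel 0 G2)) (tins 0 {#} Dv')) (Sub (sw 0 t0) (lift 0 v)) T (a3 + a2')
      (b3 + b2' + size (G2 0) * size (G2 0))"
    using t1 atyping_lift[OF sh(1), of 0] by (rule tSub_arg)
  then have "typing (tins 0 Mx (tplus (tdel 0 G2) Dv')) (Sub (sw 0 t0) (lift 0 v)) T (a3 + a2')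
      (b3 + b2' + size (G2 0) * size (G2 0))" using tins_tplus[of 0 Mx "{#}" "tdel 0 G2" Dv'] by simp
  from tSub_arg[OF this ts] have r: "typing (tplus (tplus (tdel 0 G2) Dv') (tdel 0 Ds')) (Sub (Sub (sw 0 t0) (lift 0 v)) s) T
      (a3 + a2' + a4) (b3 + b2' + size (G2 0) * size (G2 0) + b4 + size Mx * size Mx)" .
  have le: "\<And>i. tplus (tplus (tdel 0 G2) Dv') (tdel 0 Ds') i \<subseteq># G i"
  proof -
    fix i
    have "tplus (tplus (tdel 0 G2) Dv') (tdel 0 Ds') i = (tdel 0 G2 i + tdel 0 Ds' i) + Dv' i" by (simp add: tplus_at ac_simps)
    moreover have "G i = (tdel 0 G2 i + tdel 0 Ds' i) + Dv i" using h(1) G1 by (simp add: tplus_at)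
    ultimately show "tplus (tplus (tdel 0 G2) Dv') (tdel 0 Ds') i \<subseteq># G i"
      using sh(2) by (simp add: subset_mset.add_left_mono)
  qed
  have "size (G2 0) * size (G2 0) \<le> size My * size My" using My by (intro sq_mono) simp
  then show ?thesis using typing_weaken_le[OF r le] h i sh
    by (rule_tac exI[of _ "a3 + a2' + a4"], rule_tac exI[of _ "b3 + b2' + size (G2 0) * size (G2 0) + b4 + size Mx * size Mx"]) auto
qed

lemma typing_oLam_le: "typing G (Lam (Sub t0 (lift 0 s))) T a b \<Longrightarrow>
  \<exists>a' b'. typing G (Sub (Lam (sw 0 t0)) s) T a' b' \<and> a' \<le> a \<and> b' \<le> b"
proof -
  assume a0: "typing G (Lam (Sub t0 (lift 0 s))) T a b"
  obtain M T' a1 where h: "T = Arr M T'" "a = Suc a1" "typing (tins 0 M G) (Sub t0 (lift 0 s)) T' a1 b"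
    using typing_Lam[THEN iffD1, OF a0] by blast
  obtain Mx G2 Ds' a3 b3 a4 b4 where i: "tins 0 M G = tplus G2 Ds'" "typing (tins 0 Mx G2) t0 T' a3 b3"
    "atyping Ds' (lift 0 s) Mx a4 b4" "a1 = a3 + a4" "b = b3 + b4 + size Mx * size Mx"
    using typing_Sub[THEN iffD1, OF h(3)] by blast
  have ts: "atyping (tdel 0 Ds') s Mx a4 b4" by (rule atyping_unlift[OF i(3)])
  have G: "G = tplus (tdel 0 G2) (tdel 0 Ds')" using arg_cong[OF i(1), of "tdel 0"] by (simp add: tdel_tplus)
  have M: "M = G2 0 + Ds' 0" using fun_cong[OF i(1), of 0] by (simp add: tplus_at)
  have "typing (tins 0 Mx (tins 0 (G2 0) (tdel 0 G2))) t0 T' a3 b3" using i(2) by (simp add: tins_tdel)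
  from typing_sw(1)[OF this, of 0] have t1: "typing (tins 0 (G2 0) (tins 0 Mx (tdel 0 G2))) (sw 0 t0) T' a3 b3"
    by (simp add: tswap0_tins)
  have "\<And>i. tins 0 (G2 0) (tins 0 Mx (tdel 0 G2)) i \<subseteq># tins 0 M (tins 0 Mx (tdel 0 G2)) i"
    using M by (simp add: tenv_app)
  from typing_weaken_le[OF t1 this] have "typing (tins 0 Mx (tdel 0 G2)) (Lam (sw 0 t0)) (Arr M T') (Suc a3) b3"
    by (rule typing_mtyping.tLam)
  from tSub_arg[OF this ts] have "typing G (Sub (Lam (sw 0 t0)) s) T (Suc a3 + a4) (b3 + b4 + size Mx * size Mx)"
    using G h(1) by simp
  then show ?thesis using h i by (rule_tac exI[of _ "Suc a3 + a4"], rule_tac exI[of _ "b3 + b4 + size Mx * size Mx"]) auto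
qed

lemma typing_oLam_le_rev: "typing G (Sub (Lam (sw 0 t0)) s) T a b \<Longrightarrow>
  \<exists>a' b'. typing G (Lam (Sub t0 (lift 0 s))) T a' b' \<and> a' \<le> a \<and> b' \<le> b"
proof -
  assume a0: "typing G (Sub (Lam (sw 0 t0)) s) T a b"
  obtain Mx G1 Ds a1 b1 a2 b2 where h: "G = tplus G1 Ds" "typing (tins 0 Mx G1) (Lam (sw 0 t0)) T a1 b1"
    "atyping Ds s Mx a2 b2" "a = a1 + a2" "b = b1 + b2 + size Mx * size Mx"
    using typing_Sub[THEN iffD1, OF a0] by blast
  obtain M T' a3 where i: "T = Arr M T'" "a1 = Suc a3" "typing (tins 0 M (tins 0 Mx G1)) (sw 0 t0) T' a3 b1"
    using typing_Lam[THEN iffD1, OF h(2)] by blast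
  from typing_sw(1)[OF i(3), of 0] have t1: "typing (tins 0 Mx (tins 0 M G1)) t0 T' a3 b1"
    by (simp add: tswap0_tins)
  have "typing (tplus (tins 0 M G1) (tins 0 {#} Ds)) (Sub t0 (lift 0 s)) T' (a3 + a2) (b1 + b2 + size Mx * size Mx)"
    using t1 atyping_lift[OF h(3), of 0] by (rule tSub_arg)
  then have "typing (tins 0 M (tplus G1 Ds)) (Sub t0 (lift 0 s)) T' (a3 + a2) (b1 + b2 + size Mx * size Mx)"
    using tins_tplus[of 0 M "{#}" G1 Ds] by simp
  then have "typing G (Lam (Sub t0 (lift 0 s))) T (Suc (a3 + a2)) (b1 + b2 + size Mx * size Mx)"
    using h(1) i(1) by (simp add: typing_mtyping.tLam)
  then show ?thesis using h i by (rule_tac exI[of _ "Suc (a3 + a2)"], rule_tac exI[of _ "b1 + b2 + size Mx * size Mx"]) auto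
qed

lemma typing_oApp_le: "typing G (App (Sub t0 s) v) T a b \<Longrightarrow>
  \<exists>a' b'. typing G (Sub (App t0 (lift 0 v)) s) T a' b' \<and> a' \<le> a \<and> b' \<le> b"
proof -
  assume a0: "typing G (App (Sub t0 s) v) T a b"
  obtain M G1 Dv a1 b1 a2 b2 where h: "G = tplus G1 Dv" "typing G1 (Sub t0 s) (Arr M T) a1 b1"
    "atyping Dv v M a2 b2" "a = Suc (a1 + a2)" "b = b1 + b2"
    using typing_App[THEN iffD1, OF a0] by blast
  obtain Mx G2 Ds a3 b3 a4 b4 where i: "G1 = tplus G2 Ds" "typing (tins 0 Mx G2) t0 (Arr M T) a3 b3"
    "atyping Ds s Mx a4 b4" "a1 = a3 + a4" "b1 = b3 + b4 + size Mx * size Mx"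
    using typing_Sub[THEN iffD1, OF h(2)] by blast
  have "typing (tplus (tins 0 Mx G2) (tins 0 {#} Dv)) (App t0 (lift 0 v)) T (Suc (a3 + a2)) (b3 + b2)"
    using i(2) atyping_lift[OF h(3), of 0] by (rule tApp_arg)
  then have "typing (tins 0 Mx (tplus G2 Dv)) (App t0 (lift 0 v)) T (Suc (a3 + a2)) (b3 + b2)"
    using tins_tplus[of 0 Mx "{#}" G2 Dv] by simp
  from tSub_arg[OF this i(3)] have "typing G (Sub (App t0 (lift 0 v)) s) T (Suc (a3 + a2) + a4) (b3 + b2 + b4 + size Mx * size Mx)"
    using h(1) i(1) by (simp add: tplus_assoc tplus_comm tplus_lcomm)
  then show ?thesis using h i by (rule_tac exI[of _ "Suc (a3 + a2) + a4"], rule_tac exI[of _ "b3 + b2 + b4 + size Mx * size Mx"]) auto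
qed

lemma typing_oApp_le_rev: "typing G (Sub (App t0 (lift 0 v)) s) T a b \<Longrightarrow>
  \<exists>a' b'. typing G (App (Sub t0 s) v) T a' b' \<and> a' \<le> a \<and> b' \<le> b"
proof -
  assume a0: "typing G (Sub (App t0 (lift 0 v)) s) T a b"
  obtain Mx G1 Ds a1 b1 a2 b2 where h: "G = tplus G1 Ds" "typing (tins 0 Mx G1) (App t0 (lift 0 v)) T a1 b1"
    "atyping Ds s Mx a2 b2" "a = a1 + a2" "b = b1 + b2 + size Mx * size Mx"
    using typing_Sub[THEN iffD1, OF a0] by blast
  obtain M Ga Gb a3 b3 a4 b4 where i: "tins 0 Mx G1 = tplus Ga Gb" "typing Ga t0 (Arr M T) a3 b3"
    "atyping Gb (lift 0 v) M a4 b4" "a1 = Suc (a3 + a4)" "b1 = b3 + b4"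
    using typing_App[THEN iffD1, OF h(2)] by blast
  have tv: "atyping (tdel 0 Gb) v M a4 b4" by (rule atyping_unlift[OF i(3)])
  have G1: "G1 = tplus (tdel 0 Ga) (tdel 0 Gb)" using arg_cong[OF i(1), of "tdel 0"] by (simp add: tdel_tplus)
  have Mx: "Mx = Ga 0 + Gb 0" using fun_cong[OF i(1), of 0] by (simp add: tplus_at)
  from atyping_shrink[OF h(3)[unfolded Mx]] obtain Ds' a2' b2' where
    sh: "atyping Ds' s (Ga 0) a2' b2'" "\<forall>i. Ds' i \<subseteq># Ds i" "a2' \<le> a2" "b2' \<le> b2" by blast
  have "typing (tins 0 (Ga 0) (tdel 0 Ga)) t0 (Arr M T) a3 b3" using i(2) by (simp add: tins_tdel)
  from tSub_arg[OF this sh(1)] have "typing (tplus (tdel 0 Ga) Ds') (Sub t0 s) (Arr M T) (a3 + a2') (b3 + b2' + size (Ga 0) * size (Ga 0))" .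
  from tApp_arg[OF this tv] have r: "typing (tplus (tplus (tdel 0 Ga) Ds') (tdel 0 Gb)) (App (Sub t0 s) v) T
     (Suc (a3 + a2' + a4)) (b3 + b2' + size (Ga 0) * size (Ga 0) + b4)" .
  have le: "\<And>i. tplus (tplus (tdel 0 Ga) Ds') (tdel 0 Gb) i \<subseteq># G i"
  proof -
    fix i
    have "tplus (tplus (tdel 0 Ga) Ds') (tdel 0 Gb) i = (tdel 0 Ga i + tdel 0 Gb i) + Ds' i" by (simp add: tplus_at ac_simps)
    moreover have "G i = (tdel 0 Ga i + tdel 0 Gb i) + Ds i" using h(1) G1 by (simp add: tplus_at)
    ultimately show "tplus (tplus (tdel 0 Ga) Ds') (tdel 0 Gb) i \<subseteq># G i"
      using sh(2) by (simp add: subset_mset.add_left_mono)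
  qed
  have "size (Ga 0) * size (Ga 0) \<le> size Mx * size Mx" using Mx by (intro sq_mono) simp
  then show ?thesis using typing_weaken_le[OF r le] h i sh
    by (rule_tac exI[of _ "Suc (a3 + a2' + a4)"], rule_tac exI[of _ "b3 + b2' + size (Ga 0) * size (Ga 0) + b4"]) auto
qed

definition o_sym :: "trm \<Rightarrow> trm \<Rightarrow> bool" where "o_sym x y \<longleftrightarrow> o_ax x y \<or> o_ax y x"

definition both_le :: "nat \<Rightarrow> nat \<Rightarrow> nat \<Rightarrow> nat \<Rightarrow> bool" where "both_le a' b' a b \<longleftrightarrow> a' \<le> a \<and> b' \<le> b"

lemma o_sym_typing_le: "o_sym t u \<Longrightarrow> typing G t T a b \<Longrightarrow> \<exists>a' b'. typing G u T a' b' \<and> both_le a' b' a b"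
  unfolding o_sym_def both_le_def
  by (elim disjE o_ax.cases CS_ax.cases)
     (auto dest: typing_CS_le typing_CS_le[of G "sw 0 _", simplified] typing_oLam_le typing_oLam_le_rev
       typing_oApp_le typing_oApp_le_rev)

lemma ctx_o_sym_typing_le:
  "ctx o_sym t t' \<Longrightarrow> typing G t T a b \<Longrightarrow> \<exists>a' b'. typing G t' T a' b' \<and> both_le a' b' a b"
  by (rule ctx_typing_step[of o_sym both_le, OF o_sym_typing_le]) (auto simp: both_le_def)

lemma eqo_typing_le: "eqo t u \<Longrightarrow> typing G t T a b \<Longrightarrow> \<exists>a' b'. typing G u T a' b' \<and> both_le a' b' a b"
  unfolding eqo_def
proof (induct arbitrary: G T a b rule: equivclp_induct)
  case base then show ?case by (auto simp: both_le_def)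
next
  case (step y z)
  from step.hyps(3)[OF step.prems] obtain a1 b1 where h: "typing G y T a1 b1" "both_le a1 b1 a b" by blast
  have "ctx o_sym y z"
    using step.hyps(2) ctx_mono[of _ y z o_sym] ctx_converse[of o_ax z y] by (auto simp: o_sym_def)
  from ctx_o_sym_typing_le[OF this h(1)] obtain a2 b2 where
    "typing G z T a2 b2" "both_le a2 b2 a1 b1" by blast
  moreover from this(2) h(2) have "both_le a2 b2 a b" by (auto simp: both_le_def)
  ultimately show ?case by blast
qed

section \<open>Typable terms are strongly normalising for lambda-j/o\<close>

lemma lj_mod_typing_decrease:
  assumes "lj_mod eqo t u" and "typing G t T a b"
  shows "\<exists>a' b'. typing G u T a' b' \<and> lex_less a' b' a b"
proof -
  from assms(1) obtain t' u' where e: "eqo t t'" "lj t' u'" "eqo u' u" by (auto simp: lj_mod_def)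
  from eqo_typing_le[OF e(1) assms(2)] obtain a1 b1 where h1: "typing G t' T a1 b1" "both_le a1 b1 a b"
    by blast
  from lj_typing_decrease[OF e(2) h1(1)] obtain a2 b2 where h2: "typing G u' T a2 b2" "lex_less a2 b2 a1 b1"
    by blast
  from eqo_typing_le[OF e(3) h2(1)] obtain a3 b3 where h3: "typing G u T a3 b3" "both_le a3 b3 a2 b2"
    by blast
  have "lex_less a3 b3 a b" using h1(2) h2(2) h3(2) by (auto simp: both_le_def lex_less_def)
  with h3(1) show ?thesis by blast
qed

theorem typing_SN: "typing G t T a b \<Longrightarrow> SN (lj_mod eqo) t"
proof (induct a arbitrary: t b rule: less_induct)
  case (less a)
  note IH_a = less.hyps
  from less.prems show ?case
  proof (induct b arbitrary: t rule: less_induct)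
    case (less b)
    show ?case unfolding SN_def
    proof (rule accp.accI)
      fix u assume "lj_mod eqo t u"
      from lj_mod_typing_decrease[OF this less.prems] obtain a' b' where
        "typing G u T a' b'" "lex_less a' b' a b" by blast
      then show "Wellfounded.accp (\<lambda>y x. lj_mod eqo x y) u"
        using IH_a less.hyps unfolding lex_less_def SN_def by blast
    qed
  qed
qed

section \<open>Strongly beta-normalising lambda-terms are typable\<close>

definition typable :: "trm \<Rightarrow> bool" where "typable t \<longleftrightarrow> (\<exists>G T a b. typing G t T a b)"

lemma atyping_single: "atyping D u {#s#} a b \<longleftrightarrow> typing D u s a b"
  by (simp add: atyping_def mtyping_single)

lemma atyping_typable: "atyping D u M a b \<Longrightarrow> typable u"
proof (cases "M = {#}")
  case False
  then obtain x where "x \<in># M" by (meson multiset_nonemptyE)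
  moreover assume "atyping D u M a b"
  ultimately show ?thesis using False mtyping_pick unfolding atyping_def typable_def by metis
qed (auto simp: atyping_def typable_def)

lemma typable_App: "typable (App s t) \<Longrightarrow> typable s \<and> typable t"
  unfolding typable_def typing_App by (blast intro: atyping_typable[unfolded typable_def])

lemma typable_Lam: "typable (Lam s) \<longleftrightarrow> typable s"
proof
  show "typable (Lam s) \<Longrightarrow> typable s" unfolding typable_def typing_Lam by blast
next
  assume "typable s"
  then obtain G T a b where "typing (tins 0 (G 0) (tdel 0 G)) s T a b"
    by (auto simp: typable_def tins_tdel)
  then show "typable (Lam s)" unfolding typable_def by (blast intro: typing_mtyping.tLam)
qed

lemma atyping_union: "atyping E1 u M1 a1 b1 \<Longrightarrow> atyping E2 u M2 a2 b2 \<Longrightarrow> \<exists>E a b. atyping E u (M1 + M2) a b"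
  using mtyping_union[of E1 u M1 a1 b1 E2 M2 a2 b2]
  by (cases "M1 = {#}"; cases "M2 = {#}") (auto simp: atyping_def)

text \<open>It is the situation before substituting u for k.\<close>
definition pre_typing :: "trm \<Rightarrow> nat \<Rightarrow> trm \<Rightarrow> tenv \<Rightarrow> ty multiset \<Rightarrow> bool" where
  "pre_typing t k u G M \<longleftrightarrow> (\<exists>G0 E a1 b1 a2 b2. atyping G0 t M a1 b1 \<and> atyping E u (G0 k) a2 b2 \<and>
      (\<forall>i. tdel k G0 i \<subseteq># G i))"

lemma pre_typing_union:
  assumes "pre_typing t k u G1 M1" and "pre_typing t k u G2 M2"
  shows "pre_typing t k u (tplus G1 G2) (M1 + M2)"
proof -
  from assms obtain G01 E1 a1 b1 a2 b2 G02 E2 a3 b3 a4 b4 where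
    g1: "atyping G01 t M1 a1 b1" "atyping E1 u (G01 k) a2 b2" "\<forall>i. tdel k G01 i \<subseteq># G1 i" and
    g2: "atyping G02 t M2 a3 b3" "atyping E2 u (G02 k) a4 b4" "\<forall>i. tdel k G02 i \<subseteq># G2 i"
    unfolding pre_typing_def by blast
  have le1: "\<forall>i. tdel k G01 i \<subseteq># tplus G1 G2 i" and le2: "\<forall>i. tdel k G02 i \<subseteq># tplus G1 G2 i"
    using g1(3) g2(3) by (auto simp: tplus_at intro: subset_mset.order_trans)
  show ?thesis
  proof (cases "M1 = {#} \<or> M2 = {#}")
    case True
    then show ?thesis using g1 g2 le1 le2 unfolding pre_typing_def by (metis add_0 add_0_right)
  next
    case False
    then have "atyping (tplus G01 G02) t (M1 + M2) (a1 + a3) (b1 + b3)"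
      using g1(1) g2(1) mtyping_union by (simp add: atyping_def)
    moreover obtain E a b where "atyping E u (tplus G01 G02 k) a b"
      using atyping_union[OF g1(2) g2(2)] by (auto simp: tplus_at)
    moreover have "\<forall>i. tdel k (tplus G01 G02) i \<subseteq># tplus G1 G2 i"
      using g1(3) g2(3) by (auto simp: tplus_at tdel_tplus subset_mset.add_mono)
    ultimately show ?thesis unfolding pre_typing_def by blast
  qed
qed

lemma pre_typing_Var:
  assumes "typing Du u s c d" and "typing G (subst (Var j) k u) T a b"
  shows "pre_typing (Var j) k u G {#T#}"
proof (cases "j = k")
  case True
  have "typing (tsingle k T) (Var k) T 1 0" using typing_mtyping.tVar[of k T tenv0] by simp
  moreover have "atyping G u (tsingle k T k) a b" using assms(2) True by (simp add: tsingle_at atyping_single)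
  ultimately show ?thesis using True unfolding pre_typing_def atyping_single by (fastforce simp: tenv0_at)
next
  case False
  let ?j = "if j < k then j else j - 1"
  have "typing G (Var ?j) T a b" using assms(2) False by (simp split: if_splits)
  then obtain G' where G: "G = tplus (tsingle ?j T) G'" by (auto simp: typing_Var)
  have "typing (tsingle j T) (Var j) T 1 0" using typing_mtyping.tVar[of j T tenv0] by simp
  moreover have "atyping Du u (tsingle j T k) c d" using assms(1) False by (auto simp: atyping_def tsingle_at)
  moreover have "\<forall>i. tdel k (tsingle j T) i \<subseteq># G i" using False G by (simp add: tdel_tsingle tplus_at)
  ultimately show ?thesis unfolding pre_typing_def atyping_single by blast
qed

lemma pre_typing_Lam:
  assumes "pre_typing t (Suc k) (lift 0 u) (tins 0 N G) {#T#}"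
  shows "pre_typing (Lam t) k u G {#Arr N T#}"
proof -
  from assms obtain G0 E x1 y1 x2 y2 where g: "typing G0 t T x1 y1"
    "atyping E (lift 0 u) (G0 (Suc k)) x2 y2" "\<forall>i. tdel (Suc k) G0 i \<subseteq># tins 0 N G i"
    unfolding pre_typing_def atyping_single by blast
  have "G0 0 \<subseteq># N" using g(3) by (auto simp: tenv_app dest: spec[of _ 0])
  then have "\<And>i. G0 i \<subseteq># tins 0 N (tdel 0 G0) i" by (simp add: tenv_app)
  from typing_weaken_le[OF g(1) this] have "typing (tdel 0 G0) (Lam t) (Arr N T) (Suc x1) y1"
    by (rule typing_mtyping.tLam)
  moreover have "atyping (tdel 0 E) u (tdel 0 G0 k) x2 y2"
    using atyping_unlift[OF g(2)] by (simp add: tenv_app)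
  moreover have "\<forall>i. tdel k (tdel 0 G0) i \<subseteq># G i"
  proof
    fix i
    have "tdel (Suc k) G0 (Suc i) \<subseteq># tins 0 N G (Suc i)" using g(3) by blast
    then show "tdel k (tdel 0 G0) i \<subseteq># G i" by (simp add: tenv_app split: if_splits)
  qed
  ultimately show ?thesis unfolding pre_typing_def atyping_single by blast
qed

lemma pre_typing_App:
  assumes "pre_typing t1 k u G1 {#Arr M T#}" and "pre_typing t2 k u D M"
  shows "pre_typing (App t1 t2) k u (tplus G1 D) {#T#}"
proof -
  from assms obtain G01 E1 e1 f1 e2 f2 G02 E2 e3 f3 e4 f4 where
    g1: "typing G01 t1 (Arr M T) e1 f1" "atyping E1 u (G01 k) e2 f2" "\<forall>i. tdel k G01 i \<subseteq># G1 i" and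
    g2: "atyping G02 t2 M e3 f3" "atyping E2 u (G02 k) e4 f4" "\<forall>i. tdel k G02 i \<subseteq># D i"
    unfolding pre_typing_def atyping_single by blast
  have "typing (tplus G01 G02) (App t1 t2) T (Suc (e1 + e3)) (f1 + f3)" using g1(1) g2(1) by (rule tApp_arg)
  moreover obtain E e f where "atyping E u (tplus G01 G02 k) e f"
    using atyping_union[OF g1(2) g2(2)] by (auto simp: tplus_at)
  moreover have "\<forall>i. tdel k (tplus G01 G02) i \<subseteq># tplus G1 D i" using g1(3) g2(3)
    by (auto simp: tplus_at tdel_tplus subset_mset.add_mono)
  ultimately show ?thesis unfolding pre_typing_def atyping_single by blast
qed

lemma pre_typing_mtyping:
  assumes single: "\<And>G T a b. typing G (subst t k u) T a b \<Longrightarrow> pre_typing t k u G {#T#}"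
  shows "mtyping D (subst t k u) M a b \<Longrightarrow> M \<noteq> {#} \<Longrightarrow> pre_typing t k u D M"
proof (induct M arbitrary: D a b)
  case (add s M)
  from add.prems(1) obtain D1 D2 a1 b1 a2 b2 where d: "D = tplus D1 D2"
    "typing D1 (subst t k u) s a1 b1" "mtyping D2 (subst t k u) M a2 b2" by (auto simp: mtyping_add)
  show ?case
  proof (cases "M = {#}")
    case True
    then have "D2 = tenv0" using d(3) by (simp add: mtyping_empty)
    then show ?thesis using single[OF d(2)] d(1) True by simp
  next
    case False
    with pre_typing_union[OF single[OF d(2)] add.hyps[OF d(3)]] d(1) show ?thesis by simp
  qed
qed simp

text \<open>Anti-substitution: a typing of t{k/u} comes from typings of t and u, provided u is
  typable (u may be erased by the substitution).\<close>
lemma anti_subst: "is_lambda t \<Longrightarrow> typing Du u s c d \<Longrightarrow> typing G (subst t k u) T a b \<Longrightarrow>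
    pre_typing t k u G {#T#}"
proof (induct t arbitrary: k u Du s c d G T a b)
  case (Var j)
  show ?case using Var.prems(2,3) by (rule pre_typing_Var)
next
  case (Lam t)
  from Lam.prems(3) obtain N T' a1 where h: "T = Arr N T'"
    "typing (tins 0 N G) (subst t (Suc k) (lift 0 u)) T' a1 b" by (auto simp: typing_Lam)
  have "typing (tins 0 {#} Du) (lift 0 u) s c d" by (rule typing_lift(1)[OF Lam.prems(2)])
  with Lam h show ?case by (auto intro: pre_typing_Lam)
next
  case (App t1 t2)
  from App.prems(3) obtain M G1 D x1 y1 x2 y2 where h: "G = tplus G1 D"
    "typing G1 (subst t1 k u) (Arr M T) x1 y1" "atyping D (subst t2 k u) M x2 y2"
    by (auto simp: typing_App)
  have "pre_typing t2 k u D M"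
  proof (cases "M = {#}")
    case True
    then obtain s' where "typing D (subst t2 k u) s' x2 y2" using h(3) by (auto simp: atyping_def)
    with App.hyps(2)[OF _ App.prems(2)] App.prems(1) have "pre_typing t2 k u D {#s'#}" by simp
    with True show ?thesis by (fastforce simp: pre_typing_def atyping_single atyping_def[of _ _ "{#}"])
  next
    case False
    with h(3) App show ?thesis by (auto simp: atyping_def intro: pre_typing_mtyping)
  qed
  moreover have "pre_typing t1 k u G1 {#Arr M T#}" using App h(2) by simp
  ultimately show ?case using h(1) by (simp add: pre_typing_App)
qed simp

fun apps :: "trm \<Rightarrow> trm list \<Rightarrow> trm" where
  "apps h [] = h"
| "apps h (t # ts) = apps (App h t) ts"

lemma apps_snoc: "apps h (ts @ [v]) = App (apps h ts) v"
  by (induct ts arbitrary: h) auto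

lemma typable_apps: "typable (apps h ts) \<Longrightarrow> typable h \<and> (\<forall>t\<in>set ts. typable t)"
proof (induct ts arbitrary: h)
  case (Cons x ts)
  from Cons.prems have "typable (apps (App h x) ts)" by simp
  from Cons.hyps[OF this] have "typable (App h x)" "\<forall>t\<in>set ts. typable t" by blast+
  then show ?case using typable_App[of h x] by simp
qed simp

lemma beta_apps_head: "beta h h' \<Longrightarrow> beta (apps h ys) (apps h' ys)"
proof (induct ys arbitrary: h h')
  case (Cons y ys)
  have "beta (App h y) (App h' y)" using Cons.prems by (rule beta.beta_AppL)
  then show ?case using Cons.hyps by simp
qed simp

lemma beta_apps_arg: "beta t t' \<Longrightarrow> beta (apps h (xs @ t # ys)) (apps h (xs @ t' # ys))"
proof (induct xs arbitrary: h)
  case Nil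
  have "beta (App h t) (App h t')" using Nil by (rule beta.beta_AppR)
  then show ?case by (simp add: beta_apps_head)
next
  case (Cons x xs) then show ?case by simp
qed

lemma size_apps_ge: "size h \<le> size (apps h ts)"
proof (induct ts arbitrary: h)
  case (Cons x ts)
  then show ?case using Cons[of "App h x"] by simp
qed simp

lemma size_apps_arg: "t \<in> set ts \<Longrightarrow> size t < size (apps h ts)"
proof (induct ts arbitrary: h)
  case (Cons x ts)
  then show ?case using size_apps_ge[of "App h x" ts] by (cases "t = x") auto
qed simp

lemma lambda_term_cases:
  assumes "is_lambda t"
  obtains (neutral) x ts where "t = apps (Var x) ts" "\<forall>s\<in>set ts. is_lambda s"
  | (abs) b where "t = Lam b" "is_lambda b"
  | (redex) b u ts where "t = apps (App (Lam b) u) ts" "is_lambda b" "is_lambda u"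
      "\<forall>s\<in>set ts. is_lambda s"
  using assms
proof (induct t arbitrary: thesis)
  case (Var x)
  then show ?case by (metis apps.simps(1) empty_iff list.set(1))
next
  case (App t1 t2)
  then have l: "is_lambda t1" "is_lambda t2" by auto
  show ?case
  proof (rule App.hyps(1)[OF _ _ _ l(1)])
    fix x ts assume "t1 = apps (Var x) ts" "\<forall>s\<in>set ts. is_lambda s"
    then show ?thesis using App.prems(1)[of x "ts @ [t2]"] l by (auto simp: apps_snoc)
  next
    fix b assume "t1 = Lam b" "is_lambda b"
    then show ?thesis using App.prems(3)[of b t2 "[]"] l by simp
  next
    fix b u ts assume "t1 = apps (App (Lam b) u) ts" "is_lambda b" "is_lambda u" "\<forall>s\<in>set ts. is_lambda s"
    then show ?thesis using App.prems(3)[of b u "ts @ [t2]"] l by (auto simp: apps_snoc)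
  qed
qed auto

lemma typable_neutral: "\<forall>t\<in>set ts. typable t \<Longrightarrow> \<exists>G a b. typing G (apps (Var x) ts) T a b"
proof (induct ts arbitrary: T rule: rev_induct)
  case Nil
  have "typing (tsingle x T) (Var x) T 1 0" using typing_mtyping.tVar[of x T tenv0] by simp
  then show ?case by auto
next
  case (snoc v ts)
  from snoc.prems obtain Dv s av bv where "typing Dv v s av bv" by (auto simp: typable_def)
  moreover from snoc.hyps[of "Arr {#s#} T"] snoc.prems obtain G a b where
    "typing G (apps (Var x) ts) (Arr {#s#} T) a b" by auto
  ultimately have "typing (tplus G Dv) (App (apps (Var x) ts) v) T (Suc (a + av)) (b + bv)"
    using tApp_arg[of G _ "{#s#}" T] by (simp add: atyping_single)
  then show ?case by (auto simp: apps_snoc)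
qed

lemma typing_head_expansion: "is_lambda b \<Longrightarrow> typable u \<Longrightarrow> typing G (apps (subst b 0 u) ts) T a c \<Longrightarrow>
   \<exists>G' a' c'. typing G' (apps (App (Lam b) u) ts) T a' c'"
proof (induct ts arbitrary: G T a c rule: rev_induct)
  case Nil
  from Nil.prems(2) obtain Du s x y where "typing Du u s x y" by (auto simp: typable_def)
  with anti_subst[OF Nil.prems(1)] Nil.prems(3) have "pre_typing b 0 u G {#T#}" by simp
  then obtain G0 E a1 b1 a2 b2 where g: "typing G0 b T a1 b1" "atyping E u (G0 0) a2 b2"
    unfolding pre_typing_def atyping_single by blast
  have "typing (tins 0 (G0 0) (tdel 0 G0)) b T a1 b1" using g(1) by (simp add: tins_tdel)
  then have "typing (tdel 0 G0) (Lam b) (Arr (G0 0) T) (Suc a1) b1" by (rule typing_mtyping.tLam)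
  from tApp_arg[OF this g(2)] show ?case by auto
next
  case (snoc v ts)
  from snoc.prems(3) obtain M G1 D a1 b1 a2 b2 where h: "typing G1 (apps (subst b 0 u) ts) (Arr M T) a1 b1"
    "atyping D v M a2 b2" by (auto simp: apps_snoc typing_App)
  from snoc.hyps[OF snoc.prems(1,2) h(1)] obtain G' a' c'
    where "typing G' (apps (App (Lam b) u) ts) (Arr M T) a' c'" by blast
  from tApp_arg[OF this h(2)] show ?case by (auto simp: apps_snoc)
qed

lemma typable_by_reducts: "is_lambda t \<Longrightarrow> (\<And>s. beta t s \<Longrightarrow> typable s) \<Longrightarrow> typable t"
proof (induct t rule: measure_induct_rule[of size])
  case (less t)
  note reducts = less.prems(2)
  from less.prems(1) show ?case
  proof (cases rule: lambda_term_cases)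
    case (neutral x ts)
    have "typable ti" if ti: "ti \<in> set ts" for ti
    proof (rule less.hyps)
      show "size ti < size t" using size_apps_arg[OF ti, of "Var x"] neutral(1) by simp
      show "is_lambda ti" using neutral(2) ti by blast
      obtain xs ys where ts: "ts = xs @ ti # ys" using ti by (meson split_list)
      show "typable s" if "beta ti s" for s
      proof -
        have "beta t (apps (Var x) (xs @ s # ys))" using beta_apps_arg[OF that] neutral(1) ts by simp
        then have "typable (apps (Var x) (xs @ s # ys))" by (rule reducts)
        then show ?thesis using typable_apps[of "Var x" "xs @ s # ys"] by simp
      qed
    qed
    then show ?thesis using typable_neutral neutral(1) unfolding typable_def by blast
  next
    case (abs b)
    have "typable b"
    proof (rule less.hyps)
      show "size b < size t" "is_lambda b" using abs by simp_all
      show "typable s" if "beta b s" for s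
      proof -
        have "beta t (Lam s)" using beta.beta_Lam[OF that] abs(1) by simp
        then show ?thesis using reducts typable_Lam by blast
      qed
    qed
    then show ?thesis using abs(1) by (simp add: typable_Lam)
  next
    case (redex b u ts)
    have "beta t (apps (subst b 0 u) ts)"
      using beta_apps_head[OF beta.beta_root] redex(1) by simp
    then have contractum: "typable (apps (subst b 0 u) ts)" by (rule reducts)
    have "typable u"
    proof (rule less.hyps)
      show "size u < size t" using redex(1) size_apps_ge[of "App (Lam b) u" ts] by simp
      show "is_lambda u" by (rule redex(3))
      show "typable s" if "beta u s" for s
      proof -
        have "beta t (apps (App (Lam b) s) ts)"
          using beta_apps_head[OF beta.beta_AppR[OF that]] redex(1) by simp
        then have "typable (apps (App (Lam b) s) ts)" by (rule reducts)
        then show ?thesis using typable_apps typable_App by blast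
      qed
    qed
    with contractum show ?thesis
      using typing_head_expansion[OF redex(2)] redex(1) unfolding typable_def by blast
  qed
qed

theorem SN_beta_typable: "SN beta t \<Longrightarrow> is_lambda t \<Longrightarrow> typable t"
  unfolding SN_def
proof (induct rule: accp.induct)
  case (accI t)
  show ?case
  proof (rule typable_by_reducts[OF accI.prems])
    show "typable s" if "beta t s" for s using accI.hyps(2)[OF that] beta_lambda[OF that accI.prems] .
  qed
qed

section \<open>Preservation of strong normalisation and the main theorem\<close>

theorem PSN_o: "PSN (lj_mod eqo)"
  unfolding PSN_def
proof (intro allI impI)
  fix t assume "is_lambda t" "SN beta t"
  then obtain G T a b where "typing G t T a b"
    using SN_beta_typable unfolding typable_def by blast
  then show "SN (lj_mod eqo) t" by (rule typing_SN)
qed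

text \<open>A CS-step is an o-step, so lambda-j/CS-reductions are lambda-j/o-reductions.\<close>
theorem PSN_CS: "PSN (lj_mod eqCS)"
  unfolding PSN_def
proof (intro allI impI)
  fix t assume "is_lambda t" "SN beta t"
  then have "SN (lj_mod eqo) t" using PSN_o by (simp add: PSN_def)
  moreover have "(\<lambda>y x. lj_mod eqCS x y) \<le> (\<lambda>y x. lj_mod eqo x y)"
    by (auto simp: lj_mod_def intro: eqCS_eqo)
  ultimately show "SN (lj_mod eqCS) t" unfolding SN_def using accp_subset by blast
qed

theorem theorem24:
  shows "confluent_mod eqCS (lj_mod eqCS) \<and> PSN (lj_mod eqCS) \<and>
         confluent_mod eqo (lj_mod eqo) \<and> PSN (lj_mod eqo)"
  using confluent_CS PSN_CS confluent_o PSN_o by blast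

end
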